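(* Let $n\in\mathbb{N}_0$ and let $f\in C^{2n}(\mathbb{R}^d,\mathbb{R})$, $a\in C^{2n}(\mathbb{R}^d,\mathbb{R}^d)$, $b\in C^{2n}(\mathbb{R}^d,\mathbb{R}^{d\times m})$. Then for every $x_0\in\mathbb{R}^d$ $$(L^0)^n f(x_0)=\sum_{\substack{t\in LTS(I)\\ \rho(t)=n}}\ \sum_{j_1,\dots,j_{s(t)/2}=1}^m\frac{F(t)(x_0)}{2^{s(t)/2}},$$ where $L^0=\sum_{k=1}^d a^k\frac{\partial}{\partial x^k}+\frac12\sum_{k,l=1}^d\sum_{j=1}^m b^{k,j}b^{l,j}\frac{\partial^2}{\partial x^k\partial x^l}$ and $(L^0)^0$ is the identity.
   Context: Fix $d,m\ge1$, $f:\mathbb{R}^d\to\mathbb{R}$, $a:\mathbb{R}^d\to\mathbb{R}^d$, $b:\mathbb{R}^d\to\mathbb{R}^{d\times m}$ with columns $b^j$ and entries $b^{k,j}$. A monotonically labelled coloured tree with $l$ nodes consists of nodes $1,\dots,l$, a father map $t':\{2,\dots,l\}\to\{1,\dots,l-1\}$ with $t'(i)<i$ (node 1 is the root), and a colour for each node: $\gamma$ (root), $\tau$ (deterministic) or $\sigma_j$ (stochastic, with index $j$). $LTS(I)$ is the set of such trees obtainable as follows: start with the single node $1$ coloured $\gamma$; at each step, if the current tree has $\lambda$ nodes and $k-1$ pairs of stochastic nodes have been added so far, either (a) add node $\lambda+1$ coloured $\tau$ with father any node in $\{1,\dots,\lambda\}$, or (b) add nodes $\lambda+1,\lambda+2$,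 both coloured $\sigma_{j_k}$ (with $j_k$ a formal index variable), with fathers $t'(\lambda+1),t'(\lambda+2)\in\{1,\dots,\lambda\}$ (so neither new node is the father of the other). For a tree $t$: $d(t)$ = number of $\tau$-nodes, $s(t)$ = number of stochastic nodes (always even, with index variables $j_1,\dots,j_{s(t)/2}$), order $\rho(t)=d(t)+s(t)/2$. In the sums the index variables $j_1,\dots,j_{s(t)/2}$ range over $\{1,\dots,m\}$. Elementary differential: for $g$ scalar or vector valued, $g^{(k)}(x)(v_1,\dots,v_k)$ has $I$-th component $\sum_{J_1,\dots,J_k}\frac{\partial^k g^I(x)}{\partial x^{J_1}\cdots\partial x^{J_k}}v_1^{J_1}\cdots v_k^{J_k}$; for a tree with index values fixed, define recursively for node $i$ with children $c_1,\dots,c_k$: $F_i(x)=g_i^{(k)}(x)(F_{c_1}(x),\dots,F_{c_k}(x))$, where $g_i=f$ for colour $\gamma$, $g_i=a$ for $\tau$, $g_i=b^j$ for $\sigma_j$; $F(t):=F_1$. *)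

theory Defs
  imports "HOL-Analysis.Analysis"
begin

definition pd :: "'d::finite \<Rightarrow> (real^'d \<Rightarrow> real) \<Rightarrow> real^'d \<Rightarrow> real" where
  "pd k h x = deriv (\<lambda>s. h (x + s *\<^sub>R axis k 1)) 0"

fun Ck :: "nat \<Rightarrow> (real^'d::finite \<Rightarrow> real) \<Rightarrow> bool" where
  "Ck 0 h = continuous_on UNIV h"
| "Ck (Suc n) h = (continuous_on UNIV h
     \<and> (\<forall>k x. \<exists>D. ((\<lambda>s. h (x + s *\<^sub>R axis k 1)) has_real_derivative D) (at 0))
     \<and> (\<forall>k. Ck n (pd k h)))"

fun pds :: "(real^'d::finite \<Rightarrow> real) \<Rightarrow> 'd list \<Rightarrow> real^'d \<Rightarrow> real" where
  "pds h [] = h"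
| "pds h (J # Js) = pd J (pds h Js)"

definition L0 :: "(real^'d::finite \<Rightarrow> real^'d) \<Rightarrow> (real^'d \<Rightarrow> real^'m::finite^'d)
    \<Rightarrow> (real^'d \<Rightarrow> real) \<Rightarrow> real^'d \<Rightarrow> real" where
  "L0 a b h x = (\<Sum>k\<in>UNIV. a x $ k * pd k h x)
     + 1/2 * (\<Sum>k\<in>UNIV. \<Sum>l\<in>UNIV. \<Sum>j\<in>UNIV. b x $ k $ j * b x $ l $ j * pd k (pd l h) x)"

datatype colour = Gamma | Tau | Sigma nat

text \<open>A tree with l nodes is the list whose (i-1)-th entry is (father of node i, colour of node i),
  nodes labelled 1..l; the root entry is (0, Gamma) (father 0 is a dummy).
  Colour Sigma k means sigma_{j_k}.\<close>
type_synonym tree = "(nat \<times> colour) list"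

definition par :: "tree \<Rightarrow> nat \<Rightarrow> nat" where "par t i = fst (t ! (i - 1))"
definition col :: "tree \<Rightarrow> nat \<Rightarrow> colour" where "col t i = snd (t ! (i - 1))"

fun is_sigma :: "colour \<Rightarrow> bool" where
  "is_sigma (Sigma _) = True" | "is_sigma _ = False"

definition s_nodes :: "tree \<Rightarrow> nat" where "s_nodes t = length (filter (\<lambda>e. is_sigma (snd e)) t)"
definition d_nodes :: "tree \<Rightarrow> nat" where "d_nodes t = length (filter (\<lambda>e. snd e = Tau) t)"
definition rho :: "tree \<Rightarrow> nat" where "rho t = d_nodes t + s_nodes t div 2"

inductive_set LTS :: "tree set" where
  root: "[(0, Gamma)] \<in> LTS"
| tau: "\<lbrakk>t \<in> LTS; 1 \<le> p; p \<le> length t\<rbrakk> \<Longrightarrow> t @ [(p, Tau)] \<in> LTS"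
| sigma: "\<lbrakk>t \<in> LTS; 1 \<le> p; p \<le> length t; 1 \<le> q; q \<le> length t\<rbrakk> \<Longrightarrow>
     t @ [(p, Sigma (s_nodes t div 2 + 1)), (q, Sigma (s_nodes t div 2 + 1))] \<in> LTS"

definition children :: "tree \<Rightarrow> nat \<Rightarrow> nat list" where
  "children t i = filter (\<lambda>c. par t c = i) [Suc i..<Suc (length t)]"

definition dapp :: "(real^'d::finite \<Rightarrow> real) \<Rightarrow> (real^'d) list \<Rightarrow> real^'d \<Rightarrow> real" where
  "dapp h vs x = (\<Sum>J \<in> {..<length vs} \<rightarrow>\<^sub>E UNIV.
      pds h (map J [0..<length vs]) x * (\<Prod>r<length vs. vs ! r $ J r))"

function nodeF :: "(real^'d::finite \<Rightarrow> real^'d) \<Rightarrow> (real^'d \<Rightarrow> real^'m::finite^'d) \<Rightarrow> tree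
    \<Rightarrow> (nat \<Rightarrow> 'm) \<Rightarrow> nat \<Rightarrow> real^'d \<Rightarrow> real^'d" where
  "nodeF a b t js i x = (case col t i of
      Tau \<Rightarrow> (\<chi> I. dapp (\<lambda>y. a y $ I) (map (\<lambda>c. nodeF a b t js c x) (children t i)) x)
    | Sigma k \<Rightarrow> (\<chi> I. dapp (\<lambda>y. b y $ I $ js k) (map (\<lambda>c. nodeF a b t js c x) (children t i)) x)
    | Gamma \<Rightarrow> 0)"
  by pat_completeness auto
termination
  by (relation "Wellfounded.measure (\<lambda>(a, b, t, js, i, x). Suc (length t) - i)") (auto simp: children_def)

text \<open>F(t)(x) for the tree t with index values j_k = js k.\<close>
definition elemF :: "(real^'d::finite \<Rightarrow> real) \<Rightarrow> (real^'d \<Rightarrow> real^'d) \<Rightarrow> (real^'d \<Rightarrow> real^'m::finite^'d)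
    \<Rightarrow> tree \<Rightarrow> (nat \<Rightarrow> 'm) \<Rightarrow> real^'d \<Rightarrow> real" where
  "elemF f a b t js x = dapp f (map (\<lambda>c. nodeF a b t js c x) (children t 1)) x"

end

theory Submission
  imports Defs
begin

text \<open>Differentiating an elementary differential along a vector field \<open>v\<close> grafts a new leaf
  carrying \<open>v\<close> onto each node of the tree in turn (a Leibniz rule, proved for trees whose nodes
  carry arbitrary vector fields; symmetry of second derivatives makes the order of the partial
  derivatives irrelevant).  So the drift part of \<open>L\<^sup>0\<close> adds a \<open>\<tau>\<close>-leaf in every position.  The
  diffusion part differentiates twice along \<open>b\<^sup>j\<close> and so grafts two \<open>\<sigma>\<^sub>j\<close>-leaves; the grafts of the
  second leaf onto the first one are exactly the product-rule term in which \<open>b\<^sup>j\<close> itself is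
  differentiated, and cancel.  Every tree of order \<open>n + 1\<close> arises in exactly one way from a tree
  of order \<open>n\<close> by one of these two extensions, so \<open>L\<^sup>0\<close> maps the tree sum of order \<open>n\<close> to the one
  of order \<open>n + 1\<close>, and the theorem follows by induction on \<open>n\<close>.\<close>

section \<open>Partial derivatives along the coordinate axes\<close>

definition has_partials :: "(real^'d::finite \<Rightarrow> real) \<Rightarrow> bool" where
  "has_partials h \<longleftrightarrow>
     (\<forall>k x. \<exists>D. ((\<lambda>s. h (x + s *\<^sub>R axis k 1)) has_real_derivative D) (at 0))"

lemma has_partialsI:
  "(\<And>x k. ((\<lambda>s. h (x + s *\<^sub>R axis k 1)) has_real_derivative D x k) (at 0)) \<Longrightarrow> has_partials h"
  unfolding has_partials_def by blast

lemma pd_eqI: "((\<lambda>s. h (x + s *\<^sub>R axis k 1)) has_real_derivative D) (at 0) \<Longrightarrow> pd k h x = D"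
  by (simp add: pd_def DERIV_imp_deriv)

lemma has_real_derivative_pd:
  "has_partials h \<Longrightarrow> ((\<lambda>s. h (x + s *\<^sub>R axis k 1)) has_real_derivative pd k h x) (at 0)"
  unfolding has_partials_def by (metis pd_eqI)

lemma has_real_derivative_pd_at:
  assumes "has_partials h"
  shows "((\<lambda>s. h (x + s *\<^sub>R axis k 1)) has_real_derivative pd k h (x + s0 *\<^sub>R axis k 1)) (at s0)"
proof -
  from has_real_derivative_pd[OF assms, of "x + s0 *\<^sub>R axis k 1" k]
  have "((\<lambda>s. h (x + (s + s0) *\<^sub>R axis k 1)) has_real_derivative pd k h (x + s0 *\<^sub>R axis k 1)) (at 0)"
    by (simp add: scaleR_add_left algebra_simps)
  then show ?thesis using DERIV_shift[of "\<lambda>s. h (x + s *\<^sub>R axis k 1)" _ 0 s0] by simp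
qed

lemma pd_const: "pd k (\<lambda>x. c) x = 0"
  by (rule pd_eqI) simp

lemma has_partials_const: "has_partials (\<lambda>x. c)"
  by (rule has_partialsI[where D="\<lambda>x k. 0"]) simp

lemma pd_add: "has_partials g \<Longrightarrow> has_partials h \<Longrightarrow> pd k (\<lambda>x. g x + h x) x = pd k g x + pd k h x"
  by (rule pd_eqI) (intro DERIV_add has_real_derivative_pd)

lemma has_partials_add: "has_partials g \<Longrightarrow> has_partials h \<Longrightarrow> has_partials (\<lambda>x. g x + h x)"
  by (rule has_partialsI[where D="\<lambda>x k. pd k g x + pd k h x"]) (intro DERIV_add has_real_derivative_pd)

lemma pd_mult:
  "has_partials g \<Longrightarrow> has_partials h \<Longrightarrow> pd k (\<lambda>x. g x * h x) x = pd k g x * h x + g x * pd k h x"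
  by (rule pd_eqI) (auto intro!: derivative_eq_intros has_real_derivative_pd)

lemma has_partials_mult: "has_partials g \<Longrightarrow> has_partials h \<Longrightarrow> has_partials (\<lambda>x. g x * h x)"
  by (rule has_partialsI) (rule DERIV_mult[OF has_real_derivative_pd has_real_derivative_pd])

lemma pd_cmult: "has_partials h \<Longrightarrow> pd k (\<lambda>x. c * h x) x = c * pd k h x"
  by (rule pd_eqI) (auto intro!: derivative_eq_intros has_real_derivative_pd)

lemma has_partials_cmult: "has_partials h \<Longrightarrow> has_partials (\<lambda>x. c * h x)"
  by (rule has_partialsI[where D="\<lambda>x k. c * pd k h x"]) (auto intro!: derivative_eq_intros has_real_derivative_pd)

lemma pd_sum:
  "(\<And>i. i \<in> A \<Longrightarrow> has_partials (F i)) \<Longrightarrow> pd k (\<lambda>x. \<Sum>i\<in>A. F i x) x = (\<Sum>i\<in>A. pd k (F i) x)"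
  by (rule pd_eqI) (rule DERIV_sum, rule has_real_derivative_pd, blast)

lemma has_real_derivative_prod_along_axis:
  assumes "\<And>i. i \<in> A \<Longrightarrow> has_partials (F i)"
  shows "((\<lambda>s. \<Prod>i\<in>A. F i (x + s *\<^sub>R axis k 1)) has_real_derivative
           (\<Sum>i\<in>A. pd k (F i) x * (\<Prod>j\<in>A-{i}. F j x))) (at 0)"
proof -
  have "((\<lambda>u. \<Prod>i\<in>A. (\<lambda>i s. F i (x + s *\<^sub>R axis k 1)) i u) has_field_derivative
          (\<Sum>i\<in>A. pd k (F i) x * (\<Prod>j\<in>A-{i}. (\<lambda>i s. F i (x + s *\<^sub>R axis k 1)) j 0))) (at 0)"
    using assms by (intro has_field_derivative_prod) (simp add: has_real_derivative_pd)
  then show ?thesis by simp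
qed

lemma pd_prod:
  "(\<And>i. i \<in> A \<Longrightarrow> has_partials (F i)) \<Longrightarrow>
     pd k (\<lambda>x. \<Prod>i\<in>A. F i x) x = (\<Sum>i\<in>A. pd k (F i) x * (\<Prod>j\<in>A-{i}. F j x))"
  by (rule pd_eqI) (rule has_real_derivative_prod_along_axis)

lemma has_partials_prod: "(\<And>i. i \<in> A \<Longrightarrow> has_partials (F i)) \<Longrightarrow> has_partials (\<lambda>x. \<Prod>i\<in>A. F i x)"
  by (rule has_partialsI) (rule has_real_derivative_prod_along_axis)

lemma pd_linear_combination:
  "(\<And>i. i \<in> A \<Longrightarrow> has_partials (H i)) \<Longrightarrow>
     pd k (\<lambda>y. \<Sum>i\<in>A. c i * H i y) x = (\<Sum>i\<in>A. c i * pd k (H i) x)"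
  by (simp add: pd_sum has_partials_cmult pd_cmult)

lemma sum_pd_directional_derivative:
  assumes "\<And>l. has_partials (\<lambda>y. w y $ l)" and "\<And>l. has_partials (pd l E)"
  shows "(\<Sum>k\<in>UNIV. u $ k * pd k (\<lambda>y. \<Sum>l\<in>UNIV. w y $ l * pd l E y) x) =
           (\<Sum>l\<in>UNIV. (\<Sum>k\<in>UNIV. u $ k * pd k (\<lambda>y. w y $ l) x) * pd l E x)
         + (\<Sum>k\<in>UNIV. \<Sum>l\<in>UNIV. u $ k * w x $ l * pd k (pd l E) x)"
proof -
  have "pd k (\<lambda>y. \<Sum>l\<in>UNIV. w y $ l * pd l E y) x =
          (\<Sum>l\<in>UNIV. pd k (\<lambda>y. w y $ l) x * pd l E x + w x $ l * pd k (pd l E) x)" for k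
    by (simp add: pd_sum pd_mult has_partials_mult assms)
  then have "(\<Sum>k\<in>UNIV. u $ k * pd k (\<lambda>y. \<Sum>l\<in>UNIV. w y $ l * pd l E y) x) =
      (\<Sum>k\<in>UNIV. \<Sum>l\<in>UNIV. u $ k * pd k (\<lambda>y. w y $ l) x * pd l E x)
    + (\<Sum>k\<in>UNIV. \<Sum>l\<in>UNIV. u $ k * w x $ l * pd k (pd l E) x)"
    by (simp add: sum_distrib_left distrib_left sum.distrib mult.assoc)
  also have "(\<Sum>k\<in>UNIV. \<Sum>l\<in>UNIV. u $ k * pd k (\<lambda>y. w y $ l) x * pd l E x) =
      (\<Sum>l\<in>UNIV. (\<Sum>k\<in>UNIV. u $ k * pd k (\<lambda>y. w y $ l) x) * pd l E x)"
    by (subst sum.swap) (simp add: sum_distrib_right)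
  finally show ?thesis .
qed

section \<open>Functions of class \<open>C\<^sup>k\<close>\<close>

lemma Ck_Suc_has_partials: "Ck (Suc m) h \<Longrightarrow> has_partials h"
  by (simp add: has_partials_def)

lemma Ck_has_partials: "Ck m h \<Longrightarrow> 1 \<le> m \<Longrightarrow> has_partials h"
  by (cases m) (auto simp: has_partials_def)

lemma Ck_Suc_pd: "Ck (Suc m) h \<Longrightarrow> Ck m (pd k h)"
  by simp

lemma Ck_SucD: "Ck (Suc m) h \<Longrightarrow> Ck m h"
  by (induction m arbitrary: h) (simp, metis Ck.simps(2))

lemma Ck_mono:
  assumes "m \<le> m'" and "Ck m' h"
  shows "Ck m h"
proof -
  have "Ck (m + j) h \<Longrightarrow> Ck m h" for j
    by (induction j) (simp, metis Ck_SucD add_Suc_right)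
  then show ?thesis using assms by (metis le_add_diff_inverse)
qed

lemma Ck_const: "Ck m (\<lambda>x::real^'d::finite. c)"
proof (induction m arbitrary: c)
  case (Suc m)
  have "pd k (\<lambda>x::real^'d. c) = (\<lambda>x. 0)" for k
    by (rule ext) (rule pd_const)
  then show ?case
    using Suc.IH has_partials_const[unfolded has_partials_def] by (auto simp: continuous_on_const)
qed simp

lemma Ck_add: "Ck m g \<Longrightarrow> Ck m h \<Longrightarrow> Ck m (\<lambda>x. g x + h x)"
proof (induction m arbitrary: g h)
  case (Suc m)
  have l: "has_partials g" "has_partials h"
    using Suc.prems by (auto intro: Ck_Suc_has_partials)
  have "pd k (\<lambda>x. g x + h x) = (\<lambda>x. pd k g x + pd k h x)" for k
    by (rule ext) (rule pd_add[OF l])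
  then show ?case
    using Suc has_partials_add[OF l, unfolded has_partials_def] by (auto intro: continuous_on_add)
qed (simp add: continuous_on_add)

lemma Ck_mult: "Ck m g \<Longrightarrow> Ck m h \<Longrightarrow> Ck m (\<lambda>x. g x * h x)"
proof (induction m arbitrary: g h)
  case (Suc m)
  have l: "has_partials g" "has_partials h"
    using Suc.prems by (auto intro: Ck_Suc_has_partials)
  have "pd k (\<lambda>x. g x * h x) = (\<lambda>x. pd k g x * h x + g x * pd k h x)" for k
    by (rule ext) (rule pd_mult[OF l])
  moreover have "Ck m (\<lambda>x. pd k g x * h x + g x * pd k h x)" for k
    using Suc by (intro Ck_add Suc.IH) (auto intro: Ck_SucD)
  ultimately show ?case
    using Suc.prems has_partials_mult[OF l, unfolded has_partials_def] by (auto intro: continuous_on_mult)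
qed (simp add: continuous_on_mult)

lemma Ck_sum: "(\<And>i. i \<in> A \<Longrightarrow> Ck m (F i)) \<Longrightarrow> Ck m (\<lambda>x. \<Sum>i\<in>A. F i x)"
  by (induction A rule: infinite_finite_induct) (simp_all add: Ck_const Ck_add)

lemma Ck_prod: "(\<And>i. i \<in> A \<Longrightarrow> Ck m (F i)) \<Longrightarrow> Ck m (\<lambda>x. \<Prod>i\<in>A. F i x)"
  by (induction A rule: infinite_finite_induct) (simp_all add: Ck_const Ck_mult)

lemma Ck_pds: "Ck m h \<Longrightarrow> length Js \<le> m \<Longrightarrow> Ck (m - length Js) (pds h Js)"
proof (induction Js)
  case (Cons J Js)
  then have "Ck (Suc (m - length (J # Js))) (pds h Js)"
    by (metis Suc_diff_Suc Suc_le_lessD length_Cons less_or_eq_imp_le)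
  then show ?case by simp
qed simp

section \<open>Symmetry of second partial derivatives\<close>

lemma mvt_along_axis:
  assumes "has_partials g" "0 < r"
  shows "\<exists>\<sigma>. 0 < \<sigma> \<and> \<sigma> < r \<and> g (y + r *\<^sub>R axis k 1) - g y = r * pd k g (y + \<sigma> *\<^sub>R axis k 1)"
  using MVT2[of 0 r "\<lambda>s. g (y + s *\<^sub>R axis k 1)" "\<lambda>s. pd k g (y + s *\<^sub>R axis k 1)"]
    has_real_derivative_pd_at[OF assms(1)] assms(2) by auto

lemma second_difference_mvt:
  assumes "Ck 2 h" "0 < r"
  shows "\<exists>y. norm (y - x) \<le> 2 * r \<and>
    h (x + r *\<^sub>R axis k 1 + r *\<^sub>R axis l 1) - h (x + r *\<^sub>R axis k 1) - h (x + r *\<^sub>R axis l 1) + h x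
      = r\<^sup>2 * pd l (pd k h) y"
proof -
  have lh: "has_partials h" using assms(1) by (intro Ck_has_partials) auto
  have lk: "has_partials (pd k h)" using assms(1) by (intro Ck_has_partials[of 1]) (auto simp: numeral_2_eq_2)
  define \<phi> where "\<phi> u = h (x + r *\<^sub>R axis l 1 + u *\<^sub>R axis k 1) - h (x + u *\<^sub>R axis k 1)" for u
  have "DERIV \<phi> u :> pd k h (x + r *\<^sub>R axis l 1 + u *\<^sub>R axis k 1) - pd k h (x + u *\<^sub>R axis k 1)" for u
    unfolding \<phi>_def by (intro DERIV_diff has_real_derivative_pd_at lh)
  then obtain \<sigma> where s: "0 < \<sigma>" "\<sigma> < r" and
    e1: "\<phi> r - \<phi> 0 = r * (pd k h (x + r *\<^sub>R axis l 1 + \<sigma> *\<^sub>R axis k 1) - pd k h (x + \<sigma> *\<^sub>R axis k 1))"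
    using MVT2[of 0 r \<phi> "\<lambda>u. pd k h (x + r *\<^sub>R axis l 1 + u *\<^sub>R axis k 1) - pd k h (x + u *\<^sub>R axis k 1)"]
      assms(2) by auto
  obtain \<tau> where t: "0 < \<tau>" "\<tau> < r" and
    e2: "pd k h (x + \<sigma> *\<^sub>R axis k 1 + r *\<^sub>R axis l 1) - pd k h (x + \<sigma> *\<^sub>R axis k 1)
       = r * pd l (pd k h) (x + \<sigma> *\<^sub>R axis k 1 + \<tau> *\<^sub>R axis l 1)"
    using mvt_along_axis[OF lk assms(2)] by blast
  let ?y = "x + \<sigma> *\<^sub>R axis k 1 + \<tau> *\<^sub>R axis l 1"
  have "norm (?y - x) \<le> norm (\<sigma> *\<^sub>R axis k (1::real)) + norm (\<tau> *\<^sub>R axis l (1::real))"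
    by (simp add: norm_triangle_ineq add.assoc del: norm_scaleR)
  also have "\<dots> \<le> 2 * r" using s t by simp
  finally have "norm (?y - x) \<le> 2 * r" .
  moreover have "h (x + r *\<^sub>R axis k 1 + r *\<^sub>R axis l 1) - h (x + r *\<^sub>R axis k 1)
     - h (x + r *\<^sub>R axis l 1) + h x = \<phi> r - \<phi> 0"
    unfolding \<phi>_def by (simp add: algebra_simps)
  moreover have "\<phi> r - \<phi> 0 = r\<^sup>2 * pd l (pd k h) ?y"
    using e1 e2 by (simp add: algebra_simps power2_eq_square)
  ultimately show ?thesis by metis
qed

text \<open>The second difference is symmetric in \<open>k\<close> and \<open>l\<close>, so both mixed partials are attained
  at points arbitrarily close to \<open>x\<close>; continuity does the rest.\<close>

lemma mixed_partials_meet: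
  assumes "Ck 2 h" "0 < r"
  shows "\<exists>y1 y2. norm (y1 - x) \<le> 2 * r \<and> norm (y2 - x) \<le> 2 * r \<and>
           pd l (pd k h) y1 = pd k (pd l h) y2"
proof -
  obtain y1 where y1: "norm (y1 - x) \<le> 2 * r" "h (x + r *\<^sub>R axis k 1 + r *\<^sub>R axis l 1)
      - h (x + r *\<^sub>R axis k 1) - h (x + r *\<^sub>R axis l 1) + h x = r\<^sup>2 * pd l (pd k h) y1"
    using second_difference_mvt[OF assms] by blast
  obtain y2 where y2: "norm (y2 - x) \<le> 2 * r" "h (x + r *\<^sub>R axis l 1 + r *\<^sub>R axis k 1)
      - h (x + r *\<^sub>R axis l 1) - h (x + r *\<^sub>R axis k 1) + h x = r\<^sup>2 * pd k (pd l h) y2"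
    using second_difference_mvt[OF assms] by blast
  have "r\<^sup>2 * pd l (pd k h) y1 = r\<^sup>2 * pd k (pd l h) y2"
    using y1(2) y2(2) by (simp add: algebra_simps)
  then show ?thesis using y1(1) y2(1) assms(2) by auto
qed

lemma pd_commute:
  assumes "Ck 2 h"
  shows "pd l (pd k h) x = pd k (pd l h) x"
proof -
  have c1: "isCont (pd l (pd k h)) x" and c2: "isCont (pd k (pd l h)) x"
    using assms by (auto simp: numeral_2_eq_2 continuous_on_eq_continuous_at)
  have "\<bar>pd l (pd k h) x - pd k (pd l h) x\<bar> < 2 * e" if e: "e > 0" for e
  proof -
    obtain d1 where d1: "d1 > 0"
        "\<And>y. norm (y - x) < d1 \<Longrightarrow> \<bar>pd l (pd k h) y - pd l (pd k h) x\<bar> < e"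
      using c1 e unfolding continuous_at_eps_delta dist_norm by (metis real_norm_def)
    obtain d2 where d2: "d2 > 0"
        "\<And>y. norm (y - x) < d2 \<Longrightarrow> \<bar>pd k (pd l h) y - pd k (pd l h) x\<bar> < e"
      using c2 e unfolding continuous_at_eps_delta dist_norm by (metis real_norm_def)
    obtain y1 y2 where y: "norm (y1 - x) \<le> 2 * (min d1 d2 / 3)" "norm (y2 - x) \<le> 2 * (min d1 d2 / 3)"
        "pd l (pd k h) y1 = pd k (pd l h) y2"
      using mixed_partials_meet[OF assms, where r="min d1 d2 / 3" and x=x and k=k and l=l] d1(1) d2(1)
      by auto
    have "norm (y1 - x) < d1" "norm (y2 - x) < d2"
      using y(1,2) d1(1) d2(1) by auto
    then have "\<bar>pd l (pd k h) y1 - pd l (pd k h) x\<bar> < e" "\<bar>pd k (pd l h) y2 - pd k (pd l h) x\<bar> < e"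
      using d1(2) d2(2) by blast+
    then show ?thesis using y(3) by linarith
  qed
  from this[of "\<bar>pd l (pd k h) x - pd k (pd l h) x\<bar> / 2"] show ?thesis by fastforce
qed

lemma pd_commute_fun: "Ck 2 h \<Longrightarrow> pd k (pd l h) = pd l (pd k h)"
  by (rule ext) (rule pd_commute)

lemma pds_Cons_eq_snoc: "Ck (Suc (length Js)) h \<Longrightarrow> pds h (k # Js) = pds h (Js @ [k])"
proof (induction Js)
  case Nil then show ?case by simp
next
  case (Cons J Js)
  have "Ck (Suc (Suc (length Js)) - length Js) (pds h Js)"
    using Ck_pds[OF Cons.prems, of Js] by simp
  then have c2: "Ck 2 (pds h Js)" by (simp add: numeral_2_eq_2)
  have p: "Ck (Suc (Suc (length Js))) h" using Cons.prems by (simp only: length_Cons)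
  have ih: "pds h (k # Js) = pds h (Js @ [k])" by (rule Cons.IH[OF Ck_SucD[OF p]])
  have "pds h (k # J # Js) = pd k (pd J (pds h Js))" by simp
  also have "\<dots> = pd J (pd k (pds h Js))" by (rule pd_commute_fun[OF c2])
  also have "\<dots> = pd J (pds h (Js @ [k]))" using ih by simp
  finally show ?case by simp
qed

section \<open>Derivatives as multilinear forms\<close>

lemma sum_PiE_insert:
  assumes "x \<notin> S"
  shows "(\<Sum>g\<in>Pi\<^sub>E (insert x S) T. F g) = (\<Sum>y\<in>T x. \<Sum>g\<in>Pi\<^sub>E S T. F (g(x:=y)))"
proof -
  have "(\<Sum>g\<in>Pi\<^sub>E (insert x S) T. F g) = (\<Sum>p\<in>T x \<times> Pi\<^sub>E S T. F ((\<lambda>(y, g). g(x := y)) p))"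
    unfolding PiE_insert_eq by (rule sum.reindex[OF inj_combinator[OF assms], unfolded comp_def])
  also have "\<dots> = (\<Sum>y\<in>T x. \<Sum>g\<in>Pi\<^sub>E S T. F (g(x:=y)))"
    by (simp add: sum.cartesian_product split_def)
  finally show ?thesis .
qed

lemma dapp_snoc:
  fixes vs :: "(real^'d::finite) list"
  shows "dapp h (vs @ [w]) x = (\<Sum>k\<in>UNIV. w $ k * (\<Sum>J\<in>{..<length vs} \<rightarrow>\<^sub>E UNIV.
      pds h (map J [0..<length vs] @ [k]) x * (\<Prod>r<length vs. vs ! r $ J r)))"
proof -
  let ?m = "length vs"
  have "dapp h (vs @ [w]) x = (\<Sum>J\<in>Pi\<^sub>E (insert ?m {..<?m}) (\<lambda>_. UNIV).
      pds h (map J [0..<Suc ?m]) x * (\<Prod>r<Suc ?m. (vs @ [w]) ! r $ J r))"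
    unfolding dapp_def by (simp add: lessThan_Suc)
  also have "\<dots> = (\<Sum>k\<in>UNIV. \<Sum>J\<in>{..<?m} \<rightarrow>\<^sub>E UNIV.
      pds h (map (J(?m := k)) [0..<Suc ?m]) x * (\<Prod>r<Suc ?m. (vs @ [w]) ! r $ (J(?m := k)) r))"
    by (rule sum_PiE_insert) simp
  also have "\<dots> = (\<Sum>k\<in>UNIV. \<Sum>J\<in>{..<?m} \<rightarrow>\<^sub>E UNIV.
      w $ k * (pds h (map J [0..<?m] @ [k]) x * (\<Prod>r<?m. vs ! r $ J r)))"
  proof (intro sum.cong refl)
    fix k :: 'd and J :: "nat \<Rightarrow> 'd"
    have "map (J(?m := k)) [0..<Suc ?m] = map J [0..<?m] @ [k]" by simp
    moreover have "(\<Prod>r<?m. (vs @ [w]) ! r $ (J(?m := k)) r) = (\<Prod>r<?m. vs ! r $ J r)"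
      by (intro prod.cong) (auto simp: nth_append)
    ultimately show "pds h (map (J(?m := k)) [0..<Suc ?m]) x * (\<Prod>r<Suc ?m. (vs @ [w]) ! r $ (J(?m := k)) r)
      = w $ k * (pds h (map J [0..<?m] @ [k]) x * (\<Prod>r<?m. vs ! r $ J r))"
      by (simp add: algebra_simps)
  qed
  finally show ?thesis by (simp add: sum_distrib_left)
qed

lemma map_conv_nth: "map f xs = map (\<lambda>r. f (xs ! r)) [0..<length xs]"
  by (rule nth_equalityI) auto

lemma dapp_Nil: "dapp h [] x = h x"
  by (simp add: dapp_def)

lemma dapp_single: "dapp h [w] x = (\<Sum>k\<in>UNIV. w $ k * pd k h x)"
  using dapp_snoc[of h "[]" w x] by (simp add: dapp_def)

lemma pds_zero: "pds (\<lambda>y::real^'d::finite. 0) Js = (\<lambda>y. 0)"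
  by (induction Js) (auto simp: pd_const)

lemma dapp_zero: "dapp (\<lambda>y::real^'d::finite. 0) vs x = 0"
  by (simp add: dapp_def pds_zero)

lemma prod_list_update: "r < length vs \<Longrightarrow>
  (\<Prod>r'<length vs. vs[r := w] ! r' $ J r') = w $ J r * (\<Prod>r'\<in>{..<length vs}-{r}. vs ! r' $ J r')"
proof -
  assume r: "r < length vs"
  have "(\<Prod>r'<length vs. vs[r := w] ! r' $ J r') = vs[r := w] ! r $ J r * (\<Prod>r'\<in>{..<length vs}-{r}. vs[r := w] ! r' $ J r')"
    using r by (subst prod.remove[of _ r]) auto
  also have "(\<Prod>r'\<in>{..<length vs}-{r}. vs[r := w] ! r' $ J r') = (\<Prod>r'\<in>{..<length vs}-{r}. vs ! r' $ J r')"
    by (intro prod.cong) auto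
  finally show ?thesis using r by simp
qed

lemma dapp_update_sum: assumes "r < length vs"
  shows "dapp h (vs[r := (\<Sum>p\<in>P. W p)]) x = (\<Sum>p\<in>P. dapp h (vs[r := W p]) x)"
proof -
  have "dapp h (vs[r := (\<Sum>p\<in>P. W p)]) x = (\<Sum>J\<in>{..<length vs} \<rightarrow>\<^sub>E UNIV. \<Sum>p\<in>P.
      pds h (map J [0..<length vs]) x * (W p $ J r * (\<Prod>r'\<in>{..<length vs}-{r}. vs ! r' $ J r')))"
    unfolding dapp_def using assms
    by (simp add: prod_list_update sum_component sum_distrib_left sum_distrib_right)
  also have "\<dots> = (\<Sum>p\<in>P. dapp h (vs[r := W p]) x)"
    unfolding dapp_def using assms by (subst sum.swap) (simp add: prod_list_update)
  finally show ?thesis .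
qed

lemma dapp_map: "dapp h (map (\<lambda>r. V r y) [0..<m]) x =
  (\<Sum>J\<in>{..<m} \<rightarrow>\<^sub>E UNIV. pds h (map J [0..<m]) x * (\<Prod>r<m. V r y $ J r))"
  unfolding dapp_def by (intro sum.cong refl arg_cong2[where f="(*)"] prod.cong) auto

lemma Ck_dapp: assumes "Ck (q + m) h" "\<And>r J. r < m \<Longrightarrow> Ck q (\<lambda>y. V r y $ J)"
  shows "Ck q (\<lambda>y. dapp h (map (\<lambda>r. V r y) [0..<m]) y)"
  unfolding dapp_map
proof (intro Ck_sum Ck_mult Ck_prod)
  fix J :: "nat \<Rightarrow> 'a"
  show "Ck q (pds h (map J [0..<m]))" using Ck_pds[OF assms(1), of "map J [0..<m]"] by simp
qed (use assms(2) in auto)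

lemma dapp_update: "r < m \<Longrightarrow> dapp h ((map (\<lambda>r. V r x) [0..<m])[r := w]) x =
  (\<Sum>J\<in>{..<m} \<rightarrow>\<^sub>E UNIV. pds h (map J [0..<m]) x * (w $ J r * (\<Prod>r'\<in>{..<m}-{r}. V r' x $ J r')))"
proof -
  assume r: "r < m"
  let ?vs = "map (\<lambda>r. V r x) [0..<m]"
  have "dapp h (?vs[r := w]) x = (\<Sum>J\<in>{..<m} \<rightarrow>\<^sub>E UNIV. pds h (map J [0..<m]) x * (\<Prod>r'<length ?vs. ?vs[r := w] ! r' $ J r'))"
    unfolding dapp_def by simp
  also have "\<dots> = (\<Sum>J\<in>{..<m} \<rightarrow>\<^sub>E UNIV. pds h (map J [0..<m]) x * (w $ J r * (\<Prod>r'\<in>{..<m}-{r}. ?vs ! r' $ J r')))"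
  proof (intro sum.cong refl arg_cong2[where f="(*)"])
    fix J :: "nat \<Rightarrow> 'a"
    have "r < length ?vs" using r by simp
    from prod_list_update[OF this, of w J] show "(\<Prod>r'<length ?vs. ?vs[r := w] ! r' $ J r') = w $ J r * (\<Prod>r'\<in>{..<m}-{r}. ?vs ! r' $ J r')"
      by (simp only: length_map length_upt diff_zero)
  qed
  also have "\<dots> = (\<Sum>J\<in>{..<m} \<rightarrow>\<^sub>E UNIV. pds h (map J [0..<m]) x * (w $ J r * (\<Prod>r'\<in>{..<m}-{r}. V r' x $ J r')))"
    by (intro sum.cong refl arg_cong2[where f="(*)"] prod.cong) auto
  finally show ?thesis .
qed

lemma pd_dapp:
  fixes V :: "nat \<Rightarrow> real^'d::finite \<Rightarrow> real^'d"
  assumes h: "Ck (Suc m) h" and V: "\<And>r J. r < m \<Longrightarrow> has_partials (\<lambda>y. V r y $ J)"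
  shows "pd k (\<lambda>y. dapp h (map (\<lambda>r. V r y) [0..<m]) y) x =
    (\<Sum>J\<in>{..<m} \<rightarrow>\<^sub>E UNIV. pds h (map J [0..<m] @ [k]) x * (\<Prod>r<m. V r x $ J r)
       + pds h (map J [0..<m]) x *
           (\<Sum>r<m. pd k (\<lambda>y. V r y $ J r) x * (\<Prod>r'\<in>{..<m}-{r}. V r' x $ J r')))"
proof -
  let ?T = "\<lambda>J. pds h (map J [0..<m])"
  let ?Pr = "\<lambda>J y. \<Prod>r<m. V r y $ J r"
  have lT: "has_partials (?T J)" for J
    using Ck_pds[OF h, of "map J [0..<m]"] by (intro Ck_has_partials[of 1]) auto
  have lPr: "has_partials (?Pr J)" for J
    by (intro has_partials_prod V) simp
  have "pd k (\<lambda>y. dapp h (map (\<lambda>r. V r y) [0..<m]) y) x = pd k (\<lambda>y. \<Sum>J\<in>{..<m} \<rightarrow>\<^sub>E UNIV. ?T J y * ?Pr J y) x"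
    unfolding dapp_map ..
  also have "\<dots> = (\<Sum>J\<in>{..<m} \<rightarrow>\<^sub>E UNIV. pd k (?T J) x * ?Pr J x + ?T J x * pd k (?Pr J) x)"
    by (simp add: pd_sum pd_mult has_partials_mult lT lPr)
  also have "\<dots> = (\<Sum>J\<in>{..<m} \<rightarrow>\<^sub>E UNIV. pds h (map J [0..<m] @ [k]) x * ?Pr J x
       + ?T J x * (\<Sum>r<m. pd k (\<lambda>y. V r y $ J r) x * (\<Prod>r'\<in>{..<m}-{r}. V r' x $ J r')))"
  proof (intro sum.cong refl arg_cong2[where f="(+)"] arg_cong2[where f="(*)"])
    fix J :: "nat \<Rightarrow> 'd"
    have "pd k (?T J) = pds h (k # map J [0..<m])" by simp
    also have "\<dots> = pds h (map J [0..<m] @ [k])"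
      using pds_Cons_eq_snoc[of "map J [0..<m]" h k] h by simp
    finally show "pd k (?T J) x = pds h (map J [0..<m] @ [k]) x" by simp
    show "pd k (?Pr J) x = (\<Sum>r<m. pd k (\<lambda>y. V r y $ J r) x * (\<Prod>r'\<in>{..<m}-{r}. V r' x $ J r'))"
      by (intro pd_prod V) simp
  qed
  finally show ?thesis .
qed

lemma sum_pd_dapp:
  fixes V :: "nat \<Rightarrow> real^'d::finite \<Rightarrow> real^'d" and v :: "real^'d"
  assumes h: "Ck (Suc m) h" and V: "\<And>r J. r < m \<Longrightarrow> has_partials (\<lambda>y. V r y $ J)"
  shows "(\<Sum>k\<in>UNIV. v$k * pd k (\<lambda>y. dapp h (map (\<lambda>r. V r y) [0..<m]) y) x) =
    dapp h (map (\<lambda>r. V r x) [0..<m] @ [v]) x +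
    (\<Sum>r<m. dapp h ((map (\<lambda>r. V r x) [0..<m])[r := (\<chi> J. \<Sum>k\<in>UNIV. v$k * pd k (\<lambda>y. V r y $ J) x)]) x)"
proof -
  let ?P = "{..<m} \<rightarrow>\<^sub>E (UNIV::'d set)"
  let ?T = "\<lambda>J. pds h (map J [0..<m]) x"
  let ?D = "\<lambda>k r J. pd k (\<lambda>y. V r y $ J r) x"
  let ?O = "\<lambda>r J. \<Prod>r'\<in>{..<m}-{r}. V r' x $ J r'"
  have "(\<Sum>k\<in>UNIV. v$k * pd k (\<lambda>y. dapp h (map (\<lambda>r. V r y) [0..<m]) y) x) =
     (\<Sum>k\<in>UNIV. v$k * (\<Sum>J\<in>?P. pds h (map J [0..<m] @ [k]) x * (\<Prod>r<m. V r x $ J r))) +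
     (\<Sum>k\<in>UNIV. \<Sum>J\<in>?P. \<Sum>r<m. v$k * (?T J * (?D k r J * ?O r J)))"
    by (simp only: pd_dapp[OF h V] sum.distrib distrib_left sum_distrib_left)
  also have "(\<Sum>k\<in>UNIV. v$k * (\<Sum>J\<in>?P. pds h (map J [0..<m] @ [k]) x * (\<Prod>r<m. V r x $ J r))) =
      dapp h (map (\<lambda>r. V r x) [0..<m] @ [v]) x"
    by (subst dapp_snoc, simp only: length_map length_upt diff_zero,
        intro sum.cong refl arg_cong2[where f="(*)"] prod.cong) auto
  also have "(\<Sum>k\<in>UNIV. \<Sum>J\<in>?P. \<Sum>r<m. v$k * (?T J * (?D k r J * ?O r J))) =
      (\<Sum>r<m. \<Sum>J\<in>?P. ?T J * ((\<Sum>k\<in>UNIV. v$k * ?D k r J) * ?O r J))"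
  proof -
    have "(\<Sum>k\<in>UNIV. \<Sum>J\<in>?P. \<Sum>r<m. v$k * (?T J * (?D k r J * ?O r J))) =
        (\<Sum>r<m. \<Sum>J\<in>?P. \<Sum>k\<in>UNIV. v$k * (?T J * (?D k r J * ?O r J)))"
      by (subst sum.swap, subst (2) sum.swap, subst sum.swap) (rule refl)
    then show ?thesis
      by (simp add: sum_distrib_left sum_distrib_right mult.assoc mult.left_commute)
  qed
  also have "\<dots> = (\<Sum>r<m. dapp h ((map (\<lambda>r. V r x) [0..<m])[r := (\<chi> J. \<Sum>k\<in>UNIV. v$k * pd k (\<lambda>y. V r y $ J) x)]) x)"
    by (intro sum.cong refl) (simp add: dapp_update)
  finally show ?thesis .
qed

section \<open>Elementary differentials of trees with arbitrary node fields\<close>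

text \<open>\<open>node_diff t g i x\<close> is the paper's \<open>F\<^sub>i(x)\<close> for the tree \<open>t\<close> when node \<open>j\<close> carries the vector
  field \<open>g j\<close>, regardless of colours; \<open>elem_diff t g h i x\<close> is the same with the scalar function
  \<open>h\<close> placed at node \<open>i\<close>.  Freeing the node functions from the colours is what lets a single new
  leaf carry the direction of differentiation.\<close>

function node_diff ::
    "tree \<Rightarrow> (nat \<Rightarrow> real^'d::finite \<Rightarrow> real^'d) \<Rightarrow> nat \<Rightarrow> real^'d \<Rightarrow> real^'d" where
  "node_diff t g i x = (\<chi> I. dapp (\<lambda>y. g i y $ I) (map (\<lambda>c. node_diff t g c x) (children t i)) x)"
  by pat_completeness auto
termination
  by (relation "Wellfounded.measure (\<lambda>(t, g, i, x). Suc (length t) - i)") (auto simp: children_def)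

declare node_diff.simps[simp del]

definition elem_diff ::
    "tree \<Rightarrow> (nat \<Rightarrow> real^'d::finite \<Rightarrow> real^'d) \<Rightarrow> (real^'d \<Rightarrow> real) \<Rightarrow> nat \<Rightarrow> real^'d \<Rightarrow> real" where
  "elem_diff t g h i x = dapp h (map (\<lambda>c. node_diff t g c x) (children t i)) x"

lemma node_diff_component: "node_diff t g i x $ I = elem_diff t g (\<lambda>y. g i y $ I) i x"
  by (subst node_diff.simps) (simp add: elem_diff_def)

lemma children_set: "c \<in> set (children t i) \<longleftrightarrow> i < c \<and> c \<le> length t \<and> par t c = i"
  by (auto simp: children_def)

lemma distinct_children: "distinct (children t i)"
  by (simp add: children_def)

lemma length_children: "length (children t i) \<le> length t - i"
  unfolding children_def by (metis diff_Suc_Suc length_filter_le length_upt)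

lemma children_nth:
  "r < length (children t i) \<Longrightarrow>
     i < children t i ! r \<and> children t i ! r \<le> length t \<and> par t (children t i ! r) = i"
  using children_set nth_mem by blast

lemma children_beyond: "length t \<le> i \<Longrightarrow> children t i = []"
  by (auto simp: children_def filter_empty_conv)

lemma children_snoc:
  assumes "i \<le> length t"
  shows "children (t @ [(p, c0)]) i = children t i @ (if p = i then [Suc (length t)] else [])"
proof -
  have u: "[Suc i..<Suc (length (t @ [(p, c0)]))] = [Suc i..<Suc (length t)] @ [Suc (length t)]"
    using assms by simp
  have "par (t @ [(p, c0)]) c = par t c" if "c \<in> set [Suc i..<Suc (length t)]" for c
    using that by (auto simp: par_def nth_append)
  then have "filter (\<lambda>c. par (t @ [(p, c0)]) c = i) [Suc i..<Suc (length t)] = children t i"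
    unfolding children_def by (intro filter_cong) auto
  moreover have "par (t @ [(p, c0)]) (Suc (length t)) = p" by (simp add: par_def)
  ultimately show ?thesis unfolding children_def u by auto
qed

lemma node_diff_leaf: "children t i = [] \<Longrightarrow> node_diff t g i x = g i x"
  by (subst node_diff.simps) (simp add: dapp_Nil vec_eq_iff)

lemma elem_diff_conv_nth:
  "elem_diff t g h i y = dapp h (map (\<lambda>r. node_diff t g (children t i ! r) y) [0..<length (children t i)]) y"
  unfolding elem_diff_def by (subst map_conv_nth) simp

lemma node_diff_cong:
  assumes "\<forall>j\<in>S. children t1 j = children t2 j \<and> g1 j = g2 j \<and> set (children t1 j) \<subseteq> S \<union> Z"
    and "\<forall>z\<in>Z. node_diff t1 g1 z x = node_diff t2 g2 z x" and "i \<in> S"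
  shows "node_diff t1 g1 i x = node_diff t2 g2 i x"
  using assms
proof (induction t1 g1 i x rule: node_diff.induct)
  case (1 t g i x)
  have eq: "node_diff t g c x = node_diff t2 g2 c x" if c: "c \<in> set (children t i)" for c
  proof (cases "c \<in> S")
    case True
    then show ?thesis by (rule "1.IH"[OF c "1.prems"(1,2)])
  next
    case False
    then show ?thesis using "1.prems" c by blast
  qed
  have ch: "children t2 i = children t i" and gi: "g2 i = g i" using "1.prems" by auto
  have "map (\<lambda>c. node_diff t g c x) (children t i) = map (\<lambda>c. node_diff t2 g2 c x) (children t2 i)"
    unfolding ch by (rule map_cong[OF refl eq])
  then show ?case
    unfolding node_diff.simps[of t g i x] node_diff.simps[of t2 g2 i x] gi by simp
qed

lemma elem_diff_cong:
  assumes "\<And>i. i \<le> length t \<Longrightarrow> g1 i = g2 i"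
  shows "elem_diff t g1 h 1 x = elem_diff t g2 h 1 x"
proof -
  have "node_diff t g1 c x = node_diff t g2 c x" if "c \<in> set (children t 1)" for c
    using that assms by (intro node_diff_cong[where S="{j. j \<le> length t}" and Z="{}"])
      (auto simp: children_set)
  then show ?thesis unfolding elem_diff_def by (simp cong: map_cong)
qed

lemma Ck_node_diff:
  assumes "length t \<le> M" "\<forall>j I. Ck M (\<lambda>y. g j y $ I)"
  shows "Ck (M - (length t - i)) (\<lambda>y. node_diff t g i y $ I)"
proof (induction "length t - i" arbitrary: i I rule: less_induct)
  case less
  let ?cs = "children t i"
  let ?q = "M - (length t - i)"
  have "Ck ?q (\<lambda>y. dapp (\<lambda>y. g i y $ I) (map (\<lambda>r. node_diff t g (?cs ! r) y) [0..<length ?cs]) y)"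
  proof (rule Ck_dapp)
    show "Ck (?q + length ?cs) (\<lambda>y. g i y $ I)"
      by (rule Ck_mono[of _ M]) (use assms length_children[of t i] in auto)
    fix r J assume r: "r < length ?cs"
    have c: "i < ?cs ! r" "?cs ! r \<le> length t" using children_nth[OF r] by auto
    then have "Ck (M - (length t - ?cs ! r)) (\<lambda>y. node_diff t g (?cs ! r) y $ J)"
      by (intro less) auto
    then show "Ck ?q (\<lambda>y. node_diff t g (?cs ! r) y $ J)"
      by (rule Ck_mono[rotated]) (use c in auto)
  qed
  then show ?case by (simp only: node_diff_component elem_diff_conv_nth)
qed

lemma Ck_elem_diff:
  assumes "length t \<le> M" "\<forall>j I. Ck M (\<lambda>y. g j y $ I)" "Ck M h"
  shows "Ck (M - (length t - i)) (elem_diff t g h i)"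
proof -
  let ?cs = "children t i"
  let ?q = "M - (length t - i)"
  have "Ck ?q (\<lambda>y. dapp h (map (\<lambda>r. node_diff t g (?cs ! r) y) [0..<length ?cs]) y)"
  proof (rule Ck_dapp)
    show "Ck (?q + length ?cs) h"
      by (rule Ck_mono[of _ M]) (use assms length_children[of t i] in auto)
    fix r J assume r: "r < length ?cs"
    have "i < ?cs ! r" "?cs ! r \<le> length t" using children_nth[OF r] by auto
    then show "Ck ?q (\<lambda>y. node_diff t g (?cs ! r) y $ J)"
      using Ck_node_diff[OF assms(1,2), of "?cs ! r" J] by (elim Ck_mono[rotated]) auto
  qed
  then show ?thesis by (simp add: elem_diff_conv_nth[abs_def])
qed

section \<open>Subtrees\<close>

definition wf_tree :: "tree \<Rightarrow> bool" where
  "wf_tree t \<longleftrightarrow> 1 \<le> length t \<and> (\<forall>i. 2 \<le> i \<and> i \<le> length t \<longrightarrow> 1 \<le> par t i \<and> par t i < i)"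

lemma wf_tree_snoc: "wf_tree t \<Longrightarrow> 1 \<le> p \<Longrightarrow> p \<le> length t \<Longrightarrow> wf_tree (t @ [(p, c0)])"
  unfolding wf_tree_def by (auto simp: par_def nth_append)

function desc :: "tree \<Rightarrow> nat \<Rightarrow> nat \<Rightarrow> bool" where
  "desc t i p = (if p = i then True else if i < p \<and> par t p < p then desc t i (par t p) else False)"
  by pat_completeness auto
termination by (relation "Wellfounded.measure (\<lambda>(t, i, p). p)") auto

declare desc.simps[simp del]

lemma desc_refl: "desc t i i" by (subst desc.simps) simp

lemma desc_intro: "i < p \<Longrightarrow> par t p < p \<Longrightarrow> desc t i (par t p) \<Longrightarrow> desc t i p"
  by (subst desc.simps) simp

lemma desc_step: "desc t i p \<Longrightarrow> p \<noteq> i \<Longrightarrow> i < p \<and> par t p < p \<and> desc t i (par t p)"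
  by (subst (asm) desc.simps) (auto split: if_splits)

lemma desc_le: "desc t i p \<Longrightarrow> i \<le> p"
proof (induction t i p rule: desc.induct)
  case (1 t i p)
  then show ?case by (cases "p = i") (use desc_step in fastforce)+
qed

lemma desc_par: "par t p < p \<Longrightarrow> desc t (par t p) p"
  by (rule desc_intro) (auto intro: desc_refl)

lemma desc_trans: "desc t c p \<Longrightarrow> desc t i c \<Longrightarrow> desc t i p"
proof (induction p rule: less_induct)
  case (less p)
  show ?case
  proof (cases "p = c")
    case True then show ?thesis using less.prems by simp
  next
    case False
    from desc_step[OF less.prems(1) False] have h: "c < p" "par t p < p" "desc t c (par t p)" by auto
    have "desc t i (par t p)" using less.IH[OF h(2) h(3) less.prems(2)] .
    moreover have "i < p" using desc_le[OF less.prems(2)] h(1) by simp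
    ultimately show ?thesis using h(2) desc_intro by blast
  qed
qed

lemma desc_child: "c \<in> set (children t i) \<Longrightarrow> desc t i c"
  using desc_par[of t c] by (auto simp: children_set)

lemma desc_root: "wf_tree t \<Longrightarrow> 1 \<le> p \<Longrightarrow> p \<le> length t \<Longrightarrow> desc t 1 p"
proof (induction p rule: less_induct)
  case (less p)
  show ?case
  proof (cases "p = 1")
    case True then show ?thesis by (simp add: desc_refl)
  next
    case False
    then have "1 \<le> par t p" "par t p < p" using less.prems unfolding wf_tree_def by auto
    then have "desc t 1 (par t p)" using less.IH[of "par t p"] less.prems by simp
    then show ?thesis using desc_trans[OF desc_par[OF \<open>par t p < p\<close>]] by simp
  qed
qed

lemma desc_cover:
  "wf_tree t \<Longrightarrow> desc t i p \<Longrightarrow> p \<noteq> i \<Longrightarrow> p \<le> length t \<Longrightarrow> \<exists>c\<in>set (children t i). desc t c p"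
proof (induction p rule: less_induct)
  case (less p)
  from less.prems(2,3) have h: "i < p" "par t p < p" "desc t i (par t p)"
    using desc_step by blast+
  show ?case
  proof (cases "par t p = i")
    case True
    then have "p \<in> set (children t i)" using h less.prems by (auto simp: children_set)
    then show ?thesis using desc_refl by blast
  next
    case False
    then obtain c where "c \<in> set (children t i)" "desc t c (par t p)"
      using less.IH[of "par t p"] h less.prems by auto
    then show ?thesis using desc_trans desc_par h(2) by blast
  qed
qed

lemma desc_chain: "desc t c p \<Longrightarrow> desc t c' p \<Longrightarrow> c \<le> c' \<Longrightarrow> desc t c c'"
proof (induction p rule: less_induct)
  case (less p)
  show ?case
  proof (cases "p = c'")
    case True then show ?thesis using less by simp
  next
    case False
    then have h: "c' < p" "par t p < p" "desc t c' (par t p)" using less.prems(2)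
      desc_step by blast+
    have "p \<noteq> c" using h less.prems by auto
    then have "desc t c (par t p)" using less.prems(1) desc_step by blast
    then show ?thesis using less.IH h less.prems by blast
  qed
qed

lemma desc_unique:
  "c \<in> set (children t i) \<Longrightarrow> c' \<in> set (children t i) \<Longrightarrow> desc t c p \<Longrightarrow> desc t c' p \<Longrightarrow> c = c'"
proof -
  have *: "c = c'" if "c \<in> set (children t i)" "c' \<in> set (children t i)" "desc t c p" "desc t c' p" "c \<le> c'" for c c'
  proof (rule ccontr)
    assume ne: "c \<noteq> c'"
    have "desc t c c'" using desc_chain that by blast
    then have "desc t c (par t c')" using ne desc_step by blast
    then have "c \<le> i" using that(2) desc_le by (auto simp: children_set)
    then show False using that(1) by (auto simp: children_set)
  qed
  show "c \<in> set (children t i) \<Longrightarrow> c' \<in> set (children t i) \<Longrightarrow> desc t c p \<Longrightarrow> desc t c' p \<Longrightarrow> c = c'"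
    using *[of c c'] *[of c' c] by linarith
qed

definition descendants :: "tree \<Rightarrow> nat \<Rightarrow> nat set" where
  "descendants t i = {p \<in> {1..length t}. desc t i p}"

lemma descendants_root: "wf_tree t \<Longrightarrow> descendants t 1 = {1..length t}"
  using desc_root by (auto simp: descendants_def)

lemma descendants_children_disjoint:
  assumes "r < length (children t i)" "r' < length (children t i)" "r \<noteq> r'"
  shows "descendants t (children t i ! r) \<inter> descendants t (children t i ! r') = {}"
proof -
  have "children t i ! r \<noteq> children t i ! r'"
    using assms distinct_children[of t i] by (auto simp: nth_eq_iff_index_eq)
  moreover have "children t i ! r \<in> set (children t i)" "children t i ! r' \<in> set (children t i)"
    using assms by auto
  ultimately show ?thesis using desc_unique by (auto simp: descendants_def)
qed

lemma descendants_eq_insert: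
  assumes "wf_tree t" "1 \<le> i" "i \<le> length t"
  shows "descendants t i =
    insert i (\<Union>r<length (children t i). descendants t (children t i ! r))"
proof (intro equalityI subsetI)
  fix p assume p: "p \<in> descendants t i"
  show "p \<in> insert i (\<Union>r<length (children t i). descendants t (children t i ! r))"
  proof (cases "p = i")
    case False
    then obtain c where c: "c \<in> set (children t i)" "desc t c p"
      using desc_cover[OF assms(1), of i p] p by (auto simp: descendants_def)
    then obtain r where "r < length (children t i)" "c = children t i ! r"
      by (auto simp: in_set_conv_nth)
    then show ?thesis using c p by (auto simp: descendants_def)
  qed simp
next
  fix p assume "p \<in> insert i (\<Union>r<length (children t i). descendants t (children t i ! r))"
  then consider "p = i" | r where "r < length (children t i)" "p \<in> descendants t (children t i ! r)"
    by blast
  then show "p \<in> descendants t i"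
  proof cases
    case 2
    then have "desc t i (children t i ! r)" by (intro desc_child nth_mem)
    with 2 show ?thesis using desc_trans by (auto simp: descendants_def)
  qed (use assms desc_refl in \<open>auto simp: descendants_def\<close>)
qed

lemma sum_descendants:
  assumes "wf_tree t" "1 \<le> i" "i \<le> length t"
  shows "(\<Sum>p\<in>descendants t i. F p) =
    F i + (\<Sum>r<length (children t i). \<Sum>p\<in>descendants t (children t i ! r). F p)"
proof -
  have fin: "finite (descendants t j)" for j by (simp add: descendants_def)
  have "i \<notin> descendants t (children t i ! r)" if "r < length (children t i)" for r
    using children_nth[OF that] desc_le by (fastforce simp: descendants_def)
  then have "(\<Sum>p\<in>descendants t i. F p) =
      F i + (\<Sum>p\<in>(\<Union>r<length (children t i). descendants t (children t i ! r)). F p)"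
    unfolding descendants_eq_insert[OF assms] by (intro sum.insert) (use fin in auto)
  also have "(\<Sum>p\<in>(\<Union>r<length (children t i). descendants t (children t i ! r)). F p) =
      (\<Sum>r<length (children t i). \<Sum>p\<in>descendants t (children t i ! r). F p)"
    by (rule sum.UNION_disjoint) (use fin descendants_children_disjoint in auto)
  finally show ?thesis .
qed

lemma node_diff_snoc:
  assumes "j \<le> length t" "\<not> desc t j p" "\<And>i. i \<le> length t \<Longrightarrow> g' i = g i"
  shows "node_diff (t @ [(p, c0)]) g' j x = node_diff t g j x"
proof (rule node_diff_cong[where S="{j. j \<le> length t \<and> \<not> desc t j p}" and Z="{}"])
  show "\<forall>j\<in>{j. j \<le> length t \<and> \<not> desc t j p}. children (t @ [(p, c0)]) j = children t j \<and> g' j = g j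
      \<and> set (children (t @ [(p, c0)]) j) \<subseteq> {j. j \<le> length t \<and> \<not> desc t j p} \<union> {}"
  proof
    fix j assume j: "j \<in> {j. j \<le> length t \<and> \<not> desc t j p}"
    then have "children (t @ [(p, c0)]) j = children t j"
      using children_snoc[of j t p c0] desc_refl by auto
    moreover have "\<not> desc t c p" if "c \<in> set (children t j)" for c
      using j desc_trans[OF _ desc_child[OF that]] by blast
    ultimately show "children (t @ [(p, c0)]) j = children t j \<and> g' j = g j
      \<and> set (children (t @ [(p, c0)]) j) \<subseteq> {j. j \<le> length t \<and> \<not> desc t j p} \<union> {}"
      using assms(3) j by (auto simp: children_set)
  qed
qed (use assms in auto)

lemma elem_diff_snoc_at:
  assumes "i \<le> length t"
  shows "elem_diff (t @ [(i, c0)]) (g(Suc (length t) := v)) h i x =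
    dapp h (map (\<lambda>c. node_diff t g c x) (children t i) @ [v x]) x"
proof -
  have "node_diff (t @ [(i, c0)]) (g(Suc (length t) := v)) c x = node_diff t g c x"
    if "c \<in> set (children t i)" for c
    using that desc_le by (intro node_diff_snoc) (fastforce simp: children_set)+
  moreover have "node_diff (t @ [(i, c0)]) (g(Suc (length t) := v)) (Suc (length t)) x = v x"
    by (subst node_diff_leaf) (auto simp: children_beyond)
  ultimately show ?thesis
    unfolding elem_diff_def children_snoc[OF assms] by (simp cong: map_cong)
qed

lemma elem_diff_snoc_below:
  assumes i: "i \<le> length t" and r: "r < length (children t i)"
    and p: "p \<in> descendants t (children t i ! r)"
  shows "elem_diff (t @ [(p, c0)]) (g(Suc (length t) := v)) h i x =
    dapp h ((map (\<lambda>c. node_diff t g c x) (children t i))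
              [r := node_diff (t @ [(p, c0)]) (g(Suc (length t) := v)) (children t i ! r) x]) x"
proof -
  let ?cs = "children t i" and ?t' = "t @ [(p, c0)]" and ?g' = "g(Suc (length t) := v)"
  have "p \<noteq> i" using p children_nth[OF r] desc_le by (fastforce simp: descendants_def)
  then have ch: "children ?t' i = ?cs" using children_snoc[OF i, of p c0] by simp
  have others: "node_diff ?t' ?g' (?cs ! r') x = node_diff t g (?cs ! r') x"
    if "r' < length ?cs" "r' \<noteq> r" for r'
  proof (rule node_diff_snoc)
    show "\<not> desc t (?cs ! r') p"
      using descendants_children_disjoint[OF r that(1)] that(2) p desc_le
      by (auto simp: descendants_def)
  qed (use children_nth[OF that(1)] in auto)
  have "map (\<lambda>c. node_diff ?t' ?g' c x) ?cs =
      (map (\<lambda>c. node_diff t g c x) ?cs)[r := node_diff ?t' ?g' (?cs ! r) x]"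
  proof (rule nth_equalityI)
    fix j assume "j < length (map (\<lambda>c. node_diff ?t' ?g' c x) ?cs)"
    then show "map (\<lambda>c. node_diff ?t' ?g' c x) ?cs ! j =
        (map (\<lambda>c. node_diff t g c x) ?cs)[r := node_diff ?t' ?g' (?cs ! r) x] ! j"
      using others by (cases "j = r") auto
  qed simp
  then show ?thesis unfolding elem_diff_def ch by simp
qed

section \<open>The Leibniz rule for elementary differentials\<close>

text \<open>Grafting onto \<open>i\<close> itself gives the term in which \<open>h\<close> is differentiated; the grafts
  below a child \<open>c\<close> come from the induction hypothesis for \<open>c\<close>.\<close>

lemma sum_pd_elem_diff:
  fixes t :: tree and g :: "nat \<Rightarrow> real^'d::finite \<Rightarrow> real^'d" and v :: "real^'d \<Rightarrow> real^'d"
  assumes wf: "wf_tree t" and LM: "length t \<le> M" and sm: "\<forall>j I. Ck M (\<lambda>y. g j y $ I)"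
  shows "1 \<le> i \<Longrightarrow> i \<le> length t \<Longrightarrow> Ck M h \<Longrightarrow>
    (\<Sum>k\<in>UNIV. v x $ k * pd k (elem_diff t g h i) x) =
    (\<Sum>p\<in>descendants t i. elem_diff (t @ [(p, c)]) (g(Suc (length t) := v)) h i x)"
proof (induction "length t - i" arbitrary: i h rule: less_induct)
  case less
  note i1 = less.prems(1) and iL = less.prems(2) and hM = less.prems(3)
  define cs where "cs = children t i"
  define m where "m = length cs"
  define V where "V r y = node_diff t g (cs ! r) y" for r y
  define g' where "g' = g(Suc (length t) := v)"
  define vsx where "vsx = map (\<lambda>c. node_diff t g c x) cs"
  have cs_r: "i < cs ! r \<and> cs ! r \<le> length t" if "r < m" for r
    using children_nth[of r t i] that by (auto simp: cs_def m_def)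
  have vsx_nth: "vsx = map (\<lambda>r. V r x) [0..<m]"
    unfolding vsx_def V_def m_def by (rule map_conv_nth)
  have hm: "Ck (Suc m) h"
    by (rule Ck_mono[OF _ hM]) (use length_children[of t i] i1 iL LM in \<open>auto simp: m_def cs_def\<close>)
  have lV: "has_partials (\<lambda>y. V r y $ J)" if r: "r < m" for r J
    unfolding V_def using Ck_node_diff[OF LM sm, of "cs ! r" J] cs_r[OF r] i1 LM
    by (elim Ck_has_partials) auto
  have DV: "(\<chi> J. \<Sum>k\<in>UNIV. v x $ k * pd k (\<lambda>y. V r y $ J) x) =
      (\<Sum>p\<in>descendants t (cs ! r). node_diff (t @ [(p, c)]) g' (cs ! r) x)" if r: "r < m" for r
  proof -
    let ?c = "cs ! r"
    have "(\<lambda>y. V r y $ J) = elem_diff t g (\<lambda>y. g ?c y $ J) ?c" for J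
      by (rule ext) (simp add: V_def node_diff_component)
    moreover have "(\<Sum>k\<in>UNIV. v x $ k * pd k (elem_diff t g (\<lambda>y. g ?c y $ J) ?c) x) =
        (\<Sum>p\<in>descendants t ?c. elem_diff (t @ [(p, c)]) g' (\<lambda>y. g ?c y $ J) ?c x)" for J
      using less.hyps[of ?c "\<lambda>y. g ?c y $ J"] cs_r[OF r] i1 sm by (auto simp: g'_def)
    moreover have "elem_diff (t @ [(p, c)]) g' (\<lambda>y. g ?c y $ J) ?c x = node_diff (t @ [(p, c)]) g' ?c x $ J"
      for p J using cs_r[OF r] by (simp add: node_diff_component g'_def)
    ultimately show ?thesis by (simp add: vec_eq_iff sum_component)
  qed
  have "(\<Sum>k\<in>UNIV. v x $ k * pd k (elem_diff t g h i) x) = dapp h (vsx @ [v x]) x +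
      (\<Sum>r<m. dapp h (vsx[r := (\<chi> J. \<Sum>k\<in>UNIV. v x $ k * pd k (\<lambda>y. V r y $ J) x)]) x)"
    unfolding vsx_nth elem_diff_conv_nth V_def[symmetric] m_def[symmetric] cs_def[symmetric]
    by (rule sum_pd_dapp[OF hm lV])
  also have "\<dots> = dapp h (vsx @ [v x]) x +
      (\<Sum>r<m. \<Sum>p\<in>descendants t (cs ! r). dapp h (vsx[r := node_diff (t @ [(p, c)]) g' (cs ! r) x]) x)"
    by (intro arg_cong2[where f="(+)"] refl sum.cong) (simp add: DV dapp_update_sum vsx_nth)
  also have "\<dots> = elem_diff (t @ [(i, c)]) g' h i x +
      (\<Sum>r<m. \<Sum>p\<in>descendants t (cs ! r). elem_diff (t @ [(p, c)]) g' h i x)"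
    unfolding elem_diff_snoc_at[OF iL] g'_def vsx_def cs_def m_def
    by (intro arg_cong2[where f="(+)"] refl sum.cong) (simp add: elem_diff_snoc_below[OF iL])
  also have "\<dots> = (\<Sum>p\<in>descendants t i. elem_diff (t @ [(p, c)]) g' h i x)"
    unfolding sum_descendants[OF wf i1 iL] cs_def m_def ..
  finally show ?case by (simp add: g'_def)
qed

lemma sum_pd_elem_diff_root:
  fixes t :: tree and g :: "nat \<Rightarrow> real^'d::finite \<Rightarrow> real^'d" and v :: "real^'d \<Rightarrow> real^'d"
  assumes wf: "wf_tree t" and LM: "length t \<le> M" and sm: "\<forall>j I. Ck M (\<lambda>y. g j y $ I)" and hM: "Ck M h"
  shows "(\<Sum>k\<in>UNIV. v x $ k * pd k (elem_diff t g h 1) x) =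
    (\<Sum>p=1..length t. elem_diff (t @ [(p, c)]) (g(Suc (length t) := v)) h 1 x)"
proof -
  have "1 \<le> length t" using wf by (simp add: wf_tree_def)
  then show ?thesis
    using sum_pd_elem_diff[OF wf LM sm, of 1 h v x c] hM unfolding descendants_root[OF wf] by simp
qed

lemma elem_diff_chain_collapse:
  fixes t :: tree and g :: "nat \<Rightarrow> real^'d::finite \<Rightarrow> real^'d"
  assumes wf: "wf_tree t"
  defines "L \<equiv> length t"
  shows "elem_diff (t @ [(q, c1), (Suc L, c2)]) (g(Suc L := w, Suc (Suc L) := u)) h 1 x =
         elem_diff (t @ [(q, c1)]) (g(Suc L := (\<lambda>y. \<chi> I. \<Sum>k\<in>UNIV. u y $ k * pd k (\<lambda>z. w z $ I) y))) h 1 x"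
proof -
  let ?t1 = "t @ [(q, c1)]" and ?t2 = "t @ [(q, c1), (Suc L, c2)]"
  let ?g1 = "g(Suc L := (\<lambda>y. \<chi> I. \<Sum>k\<in>UNIV. u y $ k * pd k (\<lambda>z. w z $ I) y))"
  let ?g2 = "g(Suc L := w, Suc (Suc L) := u)"
  have t2: "?t2 = ?t1 @ [(Suc L, c2)]" by simp
  have l1: "length ?t1 = Suc L" by (simp add: L_def)
  let ?S = "{j. j \<le> L}" and ?Z = "{Suc L}"
  have H: "\<forall>j\<in>?S. children ?t2 j = children ?t1 j \<and> ?g2 j = ?g1 j \<and> set (children ?t2 j) \<subseteq> ?S \<union> ?Z"
  proof
    fix j assume j: "j \<in> ?S"
    have ch: "children ?t2 j = children ?t1 j" unfolding t2 using children_snoc[of j ?t1 "Suc L" c2] j l1 by simp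
    have "set (children ?t1 j) \<subseteq> ?S \<union> ?Z" using l1 by (auto simp: children_set)
    then show "children ?t2 j = children ?t1 j \<and> ?g2 j = ?g1 j \<and> set (children ?t2 j) \<subseteq> ?S \<union> ?Z"
      using ch j by simp
  qed
  have Z: "\<forall>z\<in>?Z. node_diff ?t2 ?g2 z x = node_diff ?t1 ?g1 z x"
  proof
    fix z assume "z \<in> ?Z"
    then have z: "z = Suc L" by simp
    have c2: "children ?t2 (Suc L) = [Suc (Suc L)]"
      unfolding t2 using children_snoc[of "Suc L" ?t1 "Suc L" c2] l1 children_beyond[of ?t1 "Suc L"] by simp
    have leaf: "node_diff ?t2 ?g2 (Suc (Suc L)) x = u x"
      by (subst node_diff_leaf) (auto simp: children_beyond L_def)
    have "node_diff ?t2 ?g2 (Suc L) x = (\<chi> I. \<Sum>k\<in>UNIV. u x $ k * pd k (\<lambda>z. w z $ I) x)"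
      by (subst node_diff.simps) (simp add: c2 leaf dapp_single)
    moreover have "node_diff ?t1 ?g1 (Suc L) x = (\<chi> I. \<Sum>k\<in>UNIV. u x $ k * pd k (\<lambda>z. w z $ I) x)"
      by (subst node_diff_leaf) (auto simp: children_beyond L_def)
    ultimately show "node_diff ?t2 ?g2 z x = node_diff ?t1 ?g1 z x" using z by simp
  qed
  have L1: "1 \<le> L" using wf by (simp add: wf_tree_def L_def)
  have eqc: "node_diff ?t2 ?g2 c x = node_diff ?t1 ?g1 c x" if c: "c \<in> set (children ?t1 1)" for c
  proof (cases "c = Suc L")
    case True then show ?thesis using Z by simp
  next
    case False
    then have "c \<in> ?S" using c l1 by (auto simp: children_set)
    then show ?thesis using node_diff_cong[OF H Z] by blast
  qed
  have ch1: "children ?t2 1 = children ?t1 1" using H L1 by simp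
  have ME: "map (\<lambda>c. node_diff ?t2 ?g2 c x) (children ?t1 1) = map (\<lambda>c. node_diff ?t1 ?g1 c x) (children ?t1 1)"
    by (rule map_cong[OF refl eqc])
  show ?thesis unfolding elem_diff_def ch1 by (simp only: ME)
qed

lemma sum_pd_elem_diff_after_graft:
  fixes t :: tree and g :: "nat \<Rightarrow> real^'d::finite \<Rightarrow> real^'d" and w u :: "real^'d \<Rightarrow> real^'d"
  assumes wf: "wf_tree t" and LM: "Suc (length t) \<le> M" and sm: "\<forall>j I. Ck M (\<lambda>y. g j y $ I)"
    and hM: "Ck M h" and wM: "\<forall>I. Ck M (\<lambda>y. w y $ I)" and q: "q \<in> {1..length t}"
  defines "L \<equiv> length t"
  shows "(\<Sum>k\<in>UNIV. u x $ k * pd k (elem_diff (t @ [(q, c1)]) (g(Suc L := w)) h 1) x) =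
      (\<Sum>p=1..L. elem_diff (t @ [(q, c1), (p, c2)]) (g(Suc L := w, Suc (Suc L) := u)) h 1 x) +
      elem_diff (t @ [(q, c1)]) (g(Suc L := (\<lambda>y. \<chi> I. \<Sum>k\<in>UNIV. u y $ k * pd k (\<lambda>z. w z $ I) y))) h 1 x"
proof -
  have wfq: "wf_tree (t @ [(q, c1)])" using wf_tree_snoc[OF wf] q by auto
  have smq: "\<forall>j I. Ck M (\<lambda>y. (g(Suc L := w)) j y $ I)" using sm wM by simp
  have "(\<Sum>k\<in>UNIV. u x $ k * pd k (elem_diff (t @ [(q, c1)]) (g(Suc L := w)) h 1) x) =
      (\<Sum>p=1..Suc L. elem_diff (t @ [(q, c1)] @ [(p, c2)]) (g(Suc L := w, Suc (Suc L) := u)) h 1 x)"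
    using sum_pd_elem_diff_root[where g="g(Suc L := w)" and v=u and x=x and c=c2, OF wfq _ smq hM] LM
    by (simp add: L_def)
  also have "\<dots> = (\<Sum>p=1..L. elem_diff (t @ [(q, c1), (p, c2)]) (g(Suc L := w, Suc (Suc L) := u)) h 1 x) +
      elem_diff (t @ [(q, c1), (Suc L, c2)]) (g(Suc L := w, Suc (Suc L) := u)) h 1 x"
    by simp
  finally show ?thesis unfolding L_def elem_diff_chain_collapse[OF wf] .
qed

lemma second_derivative_elem_diff:
  fixes t :: tree and g :: "nat \<Rightarrow> real^'d::finite \<Rightarrow> real^'d" and w u :: "real^'d \<Rightarrow> real^'d"
  assumes wf: "wf_tree t" and LM: "Suc (length t) \<le> M" and sm: "\<forall>j I. Ck M (\<lambda>y. g j y $ I)"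
    and hM: "Ck M h" and wM: "\<forall>I. Ck M (\<lambda>y. w y $ I)"
  shows "(\<Sum>k\<in>UNIV. \<Sum>l\<in>UNIV. u x $ k * w x $ l * pd k (pd l (elem_diff t g h 1)) x) =
    (\<Sum>q=1..length t. \<Sum>p=1..length t.
       elem_diff (t @ [(q, c1), (p, c2)]) (g(Suc (length t) := w, Suc (Suc (length t)) := u)) h 1 x)"
proof -
  define L where "L = length t"
  define E where "E = elem_diff t g h 1"
  define Dw where "Dw y = (\<chi> I. \<Sum>k\<in>UNIV. u y $ k * pd k (\<lambda>z. w z $ I) y)" for y
  have LM': "length t \<le> M" using LM by simp
  have "Ck (M - (length t - 1)) E" unfolding E_def by (rule Ck_elem_diff[OF LM' sm hM])
  then have "Ck (Suc (Suc 0)) E" by (rule Ck_mono[rotated]) (use LM wf in \<open>auto simp: wf_tree_def\<close>)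
  then have lpd: "has_partials (pd l E)" for l by (intro Ck_has_partials[of "Suc 0"]) auto
  have lw: "has_partials (\<lambda>y. w y $ l)" for l using wM LM by (intro Ck_has_partials[of M]) auto
  have lQ: "has_partials (elem_diff (t @ [(q, c1)]) (g(Suc L := w)) h 1)" for q
  proof -
    have "Ck (M - (length (t @ [(q, c1)]) - 1)) (elem_diff (t @ [(q, c1)]) (g(Suc L := w)) h 1)"
      by (rule Ck_elem_diff) (use sm wM hM LM in \<open>auto simp: L_def\<close>)
    then show ?thesis by (rule Ck_has_partials) (use LM in \<open>simp add: L_def\<close>)
  qed
  have graft_w: "(\<lambda>y. \<Sum>l\<in>UNIV. w y $ l * pd l E y) = (\<lambda>y. \<Sum>q=1..L. elem_diff (t @ [(q, c1)]) (g(Suc L := w)) h 1 y)"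
    using sum_pd_elem_diff_root[OF wf LM' sm hM] by (simp add: E_def L_def)
  have graft_Dw: "(\<Sum>l\<in>UNIV. Dw x $ l * pd l E x) = (\<Sum>q=1..L. elem_diff (t @ [(q, c1)]) (g(Suc L := Dw)) h 1 x)"
    using sum_pd_elem_diff_root[OF wf LM' sm hM] by (simp add: E_def L_def)
  have "(\<Sum>l\<in>UNIV. Dw x $ l * pd l E x) + (\<Sum>k\<in>UNIV. \<Sum>l\<in>UNIV. u x $ k * w x $ l * pd k (pd l E) x) =
      (\<Sum>k\<in>UNIV. u x $ k * pd k (\<lambda>y. \<Sum>l\<in>UNIV. w y $ l * pd l E y) x)"
    using sum_pd_directional_derivative[OF lw lpd, of "u x" x] by (simp add: Dw_def)
  also have "\<dots> = (\<Sum>q=1..L. \<Sum>k\<in>UNIV. u x $ k * pd k (elem_diff (t @ [(q, c1)]) (g(Suc L := w)) h 1) x)"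
    unfolding graft_w pd_sum[OF lQ] by (simp add: sum_distrib_left sum.swap[of _ UNIV])
  also have "\<dots> = (\<Sum>q=1..L. \<Sum>p=1..L. elem_diff (t @ [(q, c1), (p, c2)]) (g(Suc L := w, Suc (Suc L) := u)) h 1 x)
      + (\<Sum>q=1..L. elem_diff (t @ [(q, c1)]) (g(Suc L := Dw)) h 1 x)"
    unfolding Dw_def L_def sum.distrib[symmetric]
    by (rule sum.cong[OF refl]) (rule sum_pd_elem_diff_after_graft[OF wf LM sm hM wM])
  also have "\<dots> = (\<Sum>q=1..L. \<Sum>p=1..L. elem_diff (t @ [(q, c1), (p, c2)]) (g(Suc L := w, Suc (Suc L) := u)) h 1 x)
      + (\<Sum>l\<in>UNIV. Dw x $ l * pd l E x)"
    by (simp only: graft_Dw)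
  finally show ?thesis by (simp add: E_def L_def)
qed

section \<open>Monotonically labelled trees\<close>

lemma LTS_wf_tree: "t \<in> LTS \<Longrightarrow> wf_tree t"
proof (induction rule: LTS.induct)
  case root then show ?case by (simp add: wf_tree_def)
next
  case (tau t p) show ?case by (rule wf_tree_snoc[OF tau.IH tau.hyps(2,3)])
next
  case (sigma t p q)
  have "wf_tree (t @ [(p, Sigma (s_nodes t div 2 + 1))])" using sigma by (intro wf_tree_snoc) auto
  then have "wf_tree ((t @ [(p, Sigma (s_nodes t div 2 + 1))]) @ [(q, Sigma (s_nodes t div 2 + 1))])"
    using sigma by (intro wf_tree_snoc) auto
  then show ?case by simp
qed

lemma s_nodes_snoc_tau: "s_nodes (t @ [(p, Tau)]) = s_nodes t"
  by (simp add: s_nodes_def)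

lemma d_nodes_snoc_tau: "d_nodes (t @ [(p, Tau)]) = Suc (d_nodes t)"
  by (simp add: d_nodes_def)

lemma s_nodes_snoc_sigma: "s_nodes (t @ [(p, Sigma k), (q, Sigma k')]) = s_nodes t + 2"
  by (simp add: s_nodes_def)

lemma d_nodes_snoc_sigma: "d_nodes (t @ [(p, Sigma k), (q, Sigma k')]) = d_nodes t"
  by (simp add: d_nodes_def)

lemma rho_snoc_tau: "rho (t @ [(p, Tau)]) = Suc (rho t)"
  by (simp add: rho_def s_nodes_snoc_tau d_nodes_snoc_tau)
lemma rho_snoc_sigma: "rho (t @ [(p, Sigma k), (q, Sigma k')]) = Suc (rho t)"
  by (simp add: rho_def s_nodes_snoc_sigma d_nodes_snoc_sigma)

lemma LTS_length: "t \<in> LTS \<Longrightarrow> length t = 1 + d_nodes t + s_nodes t \<and> even (s_nodes t)"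
proof (induction rule: LTS.induct)
  case root then show ?case by (simp add: s_nodes_def d_nodes_def)
next
  case (tau t p) then show ?case by (simp add: s_nodes_snoc_tau d_nodes_snoc_tau)
next
  case (sigma t p q) then show ?case by (simp add: s_nodes_snoc_sigma d_nodes_snoc_sigma)
qed

lemma LTS_length_le_rho: "t \<in> LTS \<Longrightarrow> length t \<le> 1 + 2 * rho t"
  using LTS_length[of t] by (auto simp: rho_def elim!: evenE)

lemma LTS_sigma_index_le: "t \<in> LTS \<Longrightarrow> e \<in> set t \<Longrightarrow> snd e = Sigma k \<Longrightarrow> k \<le> s_nodes t div 2"
proof (induction arbitrary: e rule: LTS.induct)
  case root then show ?case by auto
next
  case (tau t p) then show ?case by (cases e) (auto simp: s_nodes_snoc_tau)
next
  case (sigma t p q)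
  then show ?case by (cases e) (fastforce simp: s_nodes_snoc_sigma)
qed

lemma LTS_rho_0: "t \<in> LTS \<Longrightarrow> rho t = 0 \<Longrightarrow> t = [(0, Gamma)]"
  by (erule LTS.cases) (auto simp: rho_snoc_tau rho_snoc_sigma)

definition trees_of_order :: "nat \<Rightarrow> tree set" where "trees_of_order n = {t \<in> LTS. rho t = n}"

definition tau_extensions :: "nat \<Rightarrow> tree set" where
  "tau_extensions n = (\<lambda>(t, p). t @ [(p, Tau)]) ` (SIGMA t:trees_of_order n. {1..length t})"
definition sigma_extensions :: "nat \<Rightarrow> tree set" where
  "sigma_extensions n = (\<lambda>(t, p, q). t @ [(p, Sigma (s_nodes t div 2 + 1)), (q, Sigma (s_nodes t div 2 + 1))]) `
     (SIGMA t:trees_of_order n. {1..length t} \<times> {1..length t})"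

lemma trees_of_order_0: "trees_of_order 0 = {[(0, Gamma)]}"
proof -
  have r: "rho [(0, Gamma)] = 0" by (simp add: rho_def s_nodes_def d_nodes_def)
  show ?thesis unfolding trees_of_order_def using LTS_rho_0 LTS.root r by blast
qed

lemma trees_of_order_Suc_subset: "trees_of_order (Suc n) \<subseteq> tau_extensions n \<union> sigma_extensions n"
proof
  fix t' assume "t' \<in> trees_of_order (Suc n)"
  then have t': "t' \<in> LTS" "rho t' = Suc n" by (auto simp: trees_of_order_def)
  from t'(1) show "t' \<in> tau_extensions n \<union> sigma_extensions n"
  proof cases
    case root
    have "rho [(0, Gamma)] = 0" by (simp add: rho_def s_nodes_def d_nodes_def)
    then show ?thesis using t'(2) root by simp
  next
    case (tau t p)
    then have "t \<in> trees_of_order n" using t'(2) by (simp add: trees_of_order_def rho_snoc_tau)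
    then have "(t, p) \<in> (SIGMA t:trees_of_order n. {1..length t})" using tau by simp
    then have "t' \<in> tau_extensions n" unfolding tau_extensions_def tau(1) by (rule rev_image_eqI) simp
    then show ?thesis by simp
  next
    case (sigma t p q)
    then have "t \<in> trees_of_order n" using t'(2) by (simp add: trees_of_order_def rho_snoc_sigma)
    then have "(t, p, q) \<in> (SIGMA t:trees_of_order n. {1..length t} \<times> {1..length t})" using sigma by simp
    then have "t' \<in> sigma_extensions n" unfolding sigma_extensions_def sigma(1) by (rule rev_image_eqI) simp
    then show ?thesis by simp
  qed
qed

lemma extensions_subset_trees_of_order_Suc: "tau_extensions n \<union> sigma_extensions n \<subseteq> trees_of_order (Suc n)"
proof
  fix t' assume "t' \<in> tau_extensions n \<union> sigma_extensions n"
  then consider "t' \<in> tau_extensions n" | "t' \<in> sigma_extensions n" by blast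
  then show "t' \<in> trees_of_order (Suc n)"
  proof cases
    case 1
    then obtain t p where tp: "t \<in> trees_of_order n" "p \<in> {1..length t}" "t' = t @ [(p, Tau)]"
      unfolding tau_extensions_def by auto
    have "t' \<in> LTS" using tp LTS.tau[of t p] by (simp add: trees_of_order_def)
    then show ?thesis using tp by (simp add: trees_of_order_def rho_snoc_tau)
  next
    case 2
    then obtain t p q where tp: "t \<in> trees_of_order n" "p \<in> {1..length t}" "q \<in> {1..length t}"
      "t' = t @ [(p, Sigma (s_nodes t div 2 + 1)), (q, Sigma (s_nodes t div 2 + 1))]"
      unfolding sigma_extensions_def by auto
    have "t' \<in> LTS" using tp LTS.sigma[of t p q] by (simp add: trees_of_order_def)
    then show ?thesis using tp by (simp add: trees_of_order_def rho_snoc_sigma)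
  qed
qed

lemma trees_of_order_Suc: "trees_of_order (Suc n) = tau_extensions n \<union> sigma_extensions n"
  by (intro equalityI trees_of_order_Suc_subset extensions_subset_trees_of_order_Suc)

lemma finite_trees_of_order: "finite (trees_of_order n)"
proof (induction n)
  case 0 then show ?case by (simp add: trees_of_order_0)
next
  case (Suc n) then show ?case by (simp add: trees_of_order_Suc tau_extensions_def sigma_extensions_def)
qed

lemma append_pair_eqD: "xs @ [a1, b1] = ys @ [a2, b2] \<Longrightarrow> xs = ys \<and> a1 = a2 \<and> b1 = b2"
proof -
  assume "xs @ [a1, b1] = ys @ [a2, b2]"
  then have "(xs @ [a1]) @ [b1] = (ys @ [a2]) @ [b2]" by simp
  then show ?thesis by simp
qed

lemma tau_extensions_inj: "inj_on (\<lambda>(t, p). t @ [(p, Tau)]) (SIGMA t:trees_of_order n. {1..length t})"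
  by (auto intro!: inj_onI)

lemma sigma_extensions_inj: "inj_on (\<lambda>(t, p, q). t @ [(p, Sigma (s_nodes t div 2 + 1)), (q, Sigma (s_nodes t div 2 + 1))])
     (SIGMA t:trees_of_order n. {1..length t} \<times> {1..length t})"
  by (auto intro!: inj_onI dest!: append_pair_eqD)

lemma finite_tau_extensions: "finite (tau_extensions n)"
  unfolding tau_extensions_def by (simp add: finite_trees_of_order)

lemma finite_sigma_extensions: "finite (sigma_extensions n)"
  unfolding sigma_extensions_def by (simp add: finite_trees_of_order)

lemma tau_sigma_extensions_disjoint: "tau_extensions n \<inter> sigma_extensions n = {}"
proof -
  have "last t1 \<noteq> last t2" if "t1 \<in> tau_extensions n" "t2 \<in> sigma_extensions n" for t1 t2
    using that unfolding tau_extensions_def sigma_extensions_def by auto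
  then show ?thesis by blast
qed

lemma sum_tau_extensions:
  "(\<Sum>t'\<in>tau_extensions n. F t') = (\<Sum>t\<in>trees_of_order n. \<Sum>p=1..length t. F (t @ [(p, Tau)]))"
proof -
  have "(\<Sum>t'\<in>tau_extensions n. F t') = (\<Sum>i\<in>(SIGMA t:trees_of_order n. {1..length t}). F (fst i @ [(snd i, Tau)]))"
    unfolding tau_extensions_def by (subst sum.reindex[OF tau_extensions_inj]) (simp add: split_def)
  also have "\<dots> = (\<Sum>t\<in>trees_of_order n. \<Sum>p=1..length t. F (t @ [(p, Tau)]))"
    by (subst sum.Sigma) (auto simp: finite_trees_of_order split_def)
  finally show ?thesis .
qed

lemma sum_sigma_extensions:
  "(\<Sum>t'\<in>sigma_extensions n. F t') = (\<Sum>t\<in>trees_of_order n. \<Sum>q=1..length t. \<Sum>p=1..length t.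
      F (t @ [(q, Sigma (s_nodes t div 2 + 1)), (p, Sigma (s_nodes t div 2 + 1))]))"
proof -
  have "(\<Sum>t'\<in>sigma_extensions n. F t') = (\<Sum>i\<in>(SIGMA t:trees_of_order n. {1..length t} \<times> {1..length t}).
      F (fst i @ [(fst (snd i), Sigma (s_nodes (fst i) div 2 + 1)), (snd (snd i), Sigma (s_nodes (fst i) div 2 + 1))]))"
    unfolding sigma_extensions_def by (subst sum.reindex[OF sigma_extensions_inj]) (simp add: split_def)
  also have "\<dots> = (\<Sum>t\<in>trees_of_order n. \<Sum>qp\<in>{1..length t} \<times> {1..length t}.
      F (t @ [(fst qp, Sigma (s_nodes t div 2 + 1)), (snd qp, Sigma (s_nodes t div 2 + 1))]))"
    by (subst sum.Sigma) (auto simp: finite_trees_of_order split_def)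
  finally show ?thesis by (simp add: sum.cartesian_product split_def)
qed

section \<open>Elementary differentials of coloured trees\<close>

declare nodeF.simps[simp del]

text \<open>The root never occurs as a child.\<close>

definition node_field :: "(real^'d::finite \<Rightarrow> real^'d) \<Rightarrow> (real^'d \<Rightarrow> real^'m::finite^'d)
    \<Rightarrow> tree \<Rightarrow> (nat \<Rightarrow> 'm) \<Rightarrow> nat \<Rightarrow> real^'d \<Rightarrow> real^'d" where
  "node_field a b t js i = (case col t i of
      Tau \<Rightarrow> a
    | Sigma k \<Rightarrow> (\<lambda>y. \<chi> I. b y $ I $ js k)
    | Gamma \<Rightarrow> (\<lambda>y. 0))"

lemma nodeF_eq_node_diff: "nodeF a b t js i x = node_diff t (node_field a b t js) i x"
proof (induction a b t js i x rule: nodeF.induct)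
  case (1 a b t js i x)
  note defs = nodeF.simps[of a b t js i x] node_diff.simps[of t "node_field a b t js" i x]
  show ?case
  proof (cases "col t i = Gamma")
    case True
    then show ?thesis unfolding defs by (simp add: node_field_def dapp_zero vec_eq_iff)
  next
    case False
    then have m: "map (\<lambda>c. nodeF a b t js c x) (children t i) =
        map (\<lambda>c. node_diff t (node_field a b t js) c x) (children t i)"
      using "1.IH" by (cases "col t i") (auto intro: map_cong)
    show ?thesis unfolding defs m using False by (cases "col t i") (simp_all add: node_field_def)
  qed
qed

lemma elemF_eq_elem_diff: "elemF f a b t js x = elem_diff t (node_field a b t js) f 1 x"
  unfolding elemF_def elem_diff_def by (simp only: nodeF_eq_node_diff)

lemma Ck_node_field:
  assumes aM: "\<forall>I. Ck M (\<lambda>y. a y $ I)" and bM: "\<forall>k j. Ck M (\<lambda>y. b y $ k $ j)"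
  shows "\<forall>j I. Ck M (\<lambda>y. node_field a b t js j y $ I)"
proof (intro allI)
  fix j I
  show "Ck M (\<lambda>y. node_field a b t js j y $ I)"
  proof (cases "col t j")
    case Gamma then show ?thesis by (simp add: node_field_def Ck_const)
  next
    case Tau then show ?thesis using aM by (simp add: node_field_def)
  next
    case (Sigma k) then show ?thesis using bM by (simp add: node_field_def)
  qed
qed

lemma node_field_snoc_tau: "1 \<le> length t \<Longrightarrow> nd \<le> Suc (length t) \<Longrightarrow>
    node_field a b (t @ [(p, Tau)]) js nd = ((node_field a b t js)(Suc (length t) := a)) nd"
  by (cases "nd = Suc (length t)") (auto simp: node_field_def col_def nth_append)

lemma node_field_snoc_sigma:
  assumes t: "t \<in> LTS" and K: "K = s_nodes t div 2" and i: "i \<le> Suc (Suc (length t))"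
  shows "node_field a b (t @ [(p, Sigma (Suc K)), (q, Sigma (Suc K))]) (js(Suc K := j)) i =
    ((node_field a b t js)(Suc (length t) := (\<lambda>y. \<chi> I. b y $ I $ j), Suc (Suc (length t)) := (\<lambda>y. \<chi> I. b y $ I $ j))) i"
proof -
  have L1: "1 \<le> length t" using LTS_wf_tree[OF t] by (simp add: wf_tree_def)
  consider "i = Suc (length t)" | "i = Suc (Suc (length t))" | "i \<le> length t" using i by linarith
  then show ?thesis
  proof cases
    case 3
    then have ii: "i - 1 < length t" using L1 by simp
    have cl: "col (t @ [(p, Sigma (Suc K)), (q, Sigma (Suc K))]) i = col t i"
      using ii by (simp add: col_def nth_append)
    have "node_field a b (t @ [(p, Sigma (Suc K)), (q, Sigma (Suc K))]) (js(Suc K := j)) i = node_field a b t js i"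
    proof (cases "col t i")
      case (Sigma k)
      have "t ! (i - 1) \<in> set t" using ii by simp
      then have "k \<le> K" using LTS_sigma_index_le[OF t, of "t ! (i - 1)" k] Sigma K by (simp add: col_def)
      then show ?thesis using Sigma cl by (simp add: node_field_def)
    qed (use cl in \<open>simp_all add: node_field_def\<close>)
    then show ?thesis using 3 by simp
  qed (auto simp: node_field_def col_def nth_append)
qed

lemma Ck_elemF:
  assumes fM: "Ck M f" and aM: "\<forall>I. Ck M (\<lambda>y. a y $ I)" and bM: "\<forall>k j. Ck M (\<lambda>y. b y $ k $ j)"
    and LM: "length t \<le> M"
  shows "Ck (M - (length t - 1)) (elemF f a b t js)"
proof -
  have "elemF f a b t js = elem_diff t (node_field a b t js) f 1" by (rule ext) (rule elemF_eq_elem_diff)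
  then show ?thesis using Ck_elem_diff[OF LM Ck_node_field[OF aM bM] fM] by simp
qed

lemma drift_term_elemF:
  assumes fM: "Ck M f" and aM: "\<forall>I. Ck M (\<lambda>y. a y $ I)" and bM: "\<forall>k j. Ck M (\<lambda>y. b y $ k $ j)"
    and t: "t \<in> LTS" and LM: "length t \<le> M"
  shows "(\<Sum>k\<in>UNIV. a x $ k * pd k (elemF f a b t js) x) = (\<Sum>p=1..length t. elemF f a b (t @ [(p, Tau)]) js x)"
proof -
  have wf: "wf_tree t" by (rule LTS_wf_tree[OF t])
  have L1: "1 \<le> length t" using wf by (simp add: wf_tree_def)
  have e: "elemF f a b t js = elem_diff t (node_field a b t js) f 1" by (rule ext) (rule elemF_eq_elem_diff)
  have "(\<Sum>k\<in>UNIV. a x $ k * pd k (elem_diff t (node_field a b t js) f 1) x) =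
     (\<Sum>p=1..length t. elem_diff (t @ [(p, Tau)]) ((node_field a b t js)(Suc (length t) := a)) f 1 x)"
    by (rule sum_pd_elem_diff_root[OF wf LM Ck_node_field[OF aM bM] fM])
  also have "\<dots> = (\<Sum>p=1..length t. elemF f a b (t @ [(p, Tau)]) js x)"
  proof (rule sum.cong[OF refl])
    fix p assume "p \<in> {1..length t}"
    have "elem_diff (t @ [(p, Tau)]) ((node_field a b t js)(Suc (length t) := a)) f 1 x = elem_diff (t @ [(p, Tau)]) (node_field a b (t @ [(p, Tau)]) js) f 1 x"
      by (rule elem_diff_cong) (simp add: node_field_snoc_tau[OF L1])
    then show "elem_diff (t @ [(p, Tau)]) ((node_field a b t js)(Suc (length t) := a)) f 1 x = elemF f a b (t @ [(p, Tau)]) js x"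
      by (simp add: elemF_eq_elem_diff)
  qed
  finally show ?thesis unfolding e .
qed

lemma diffusion_term_elemF:
  assumes fM: "Ck M f" and aM: "\<forall>I. Ck M (\<lambda>y. a y $ I)" and bM: "\<forall>k j. Ck M (\<lambda>y. b y $ k $ j)"
    and t: "t \<in> LTS" and LM: "Suc (length t) \<le> M" and K: "K = s_nodes t div 2"
  shows "(\<Sum>k\<in>UNIV. \<Sum>l\<in>UNIV. b x $ k $ j * b x $ l $ j * pd k (pd l (elemF f a b t js)) x) =
    (\<Sum>q=1..length t. \<Sum>p=1..length t. elemF f a b (t @ [(q, Sigma (K+1)), (p, Sigma (K+1))]) (js(K+1 := j)) x)"
proof -
  have wf: "wf_tree t" by (rule LTS_wf_tree[OF t])
  define bj where "bj = (\<lambda>y. \<chi> I. b y $ I $ j)"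
  have bjM: "\<forall>I. Ck M (\<lambda>y. bj y $ I)" using bM by (simp add: bj_def)
  have e: "elemF f a b t js = elem_diff t (node_field a b t js) f 1" by (rule ext) (rule elemF_eq_elem_diff)
  have "(\<Sum>k\<in>UNIV. \<Sum>l\<in>UNIV. bj x $ k * bj x $ l * pd k (pd l (elem_diff t (node_field a b t js) f 1)) x) =
    (\<Sum>q=1..length t. \<Sum>p=1..length t. elem_diff (t @ [(q, Sigma (K+1)), (p, Sigma (K+1))])
       ((node_field a b t js)(Suc (length t) := bj, Suc (Suc (length t)) := bj)) f 1 x)"
    by (rule second_derivative_elem_diff[OF wf LM Ck_node_field[OF aM bM] fM bjM])
  also have "\<dots> = (\<Sum>q=1..length t. \<Sum>p=1..length t. elemF f a b (t @ [(q, Sigma (K+1)), (p, Sigma (K+1))]) (js(K+1 := j)) x)"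
  proof (intro sum.cong refl)
    fix q p
    have "elem_diff (t @ [(q, Sigma (K+1)), (p, Sigma (K+1))]) ((node_field a b t js)(Suc (length t) := bj, Suc (Suc (length t)) := bj)) f 1 x =
      elem_diff (t @ [(q, Sigma (K+1)), (p, Sigma (K+1))]) (node_field a b (t @ [(q, Sigma (K+1)), (p, Sigma (K+1))]) (js(K+1 := j))) f 1 x"
      by (rule elem_diff_cong) (simp add: node_field_snoc_sigma[OF t K] bj_def)
    then show "elem_diff (t @ [(q, Sigma (K+1)), (p, Sigma (K+1))]) ((node_field a b t js)(Suc (length t) := bj, Suc (Suc (length t)) := bj)) f 1 x =
      elemF f a b (t @ [(q, Sigma (K+1)), (p, Sigma (K+1))]) (js(K+1 := j)) x"
      by (simp add: elemF_eq_elem_diff)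
  qed
  finally show ?thesis unfolding e by (simp add: bj_def)
qed

lemma L0_linear_combination:
  fixes H :: "'i \<Rightarrow> real^'d::finite \<Rightarrow> real" and b :: "real^'d \<Rightarrow> real^'m::finite^'d"
  assumes l1: "\<And>i. i \<in> A \<Longrightarrow> has_partials (H i)" and l2: "\<And>i l. i \<in> A \<Longrightarrow> has_partials (pd l (H i))"
  shows "L0 a b (\<lambda>y. \<Sum>i\<in>A. c i * H i y) x = (\<Sum>i\<in>A. c i * L0 a b (H i) x)"
proof -
  have p1: "pd k (\<lambda>y. \<Sum>i\<in>A. c i * H i y) = (\<lambda>y. \<Sum>i\<in>A. c i * pd k (H i) y)" for k
    by (rule ext) (rule pd_linear_combination[OF l1])
  have p2: "pd k (pd l (\<lambda>y. \<Sum>i\<in>A. c i * H i y)) x = (\<Sum>i\<in>A. c i * pd k (pd l (H i)) x)" for k l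
    unfolding p1 by (rule pd_linear_combination[OF l2])
  have s1: "(\<Sum>k\<in>UNIV. a x $ k * (\<Sum>i\<in>A. c i * pd k (H i) x)) = (\<Sum>i\<in>A. c i * (\<Sum>k\<in>UNIV. a x $ k * pd k (H i) x))"
    by (simp add: sum_distrib_left sum.swap[of _ "UNIV::'d set" A] mult.left_commute)
  have s2: "(\<Sum>k\<in>UNIV. \<Sum>l\<in>UNIV. \<Sum>j\<in>UNIV. b x $ k $ j * b x $ l $ j * (\<Sum>i\<in>A. c i * pd k (pd l (H i)) x)) =
     (\<Sum>i\<in>A. c i * (\<Sum>k\<in>UNIV. \<Sum>l\<in>UNIV. \<Sum>j\<in>UNIV. b x $ k $ j * b x $ l $ j * pd k (pd l (H i)) x))"
  proof -
    have "(\<Sum>k\<in>UNIV. \<Sum>l\<in>UNIV. \<Sum>j\<in>UNIV. b x $ k $ j * b x $ l $ j * (\<Sum>i\<in>A. c i * pd k (pd l (H i)) x)) =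
      (\<Sum>k\<in>UNIV. \<Sum>l\<in>UNIV. \<Sum>i\<in>A. c i * (\<Sum>j\<in>UNIV. b x $ k $ j * b x $ l $ j * pd k (pd l (H i)) x))"
      by (simp add: sum_distrib_left sum.swap[of _ "UNIV::'m set" A] mult.left_commute)
    also have "\<dots> = (\<Sum>k\<in>UNIV. \<Sum>i\<in>A. c i * (\<Sum>l\<in>UNIV. \<Sum>j\<in>UNIV. b x $ k $ j * b x $ l $ j * pd k (pd l (H i)) x))"
      by (simp add: sum_distrib_left sum.swap[of _ "UNIV::'d set" A])
    also have "\<dots> = (\<Sum>i\<in>A. c i * (\<Sum>k\<in>UNIV. \<Sum>l\<in>UNIV. \<Sum>j\<in>UNIV. b x $ k $ j * b x $ l $ j * pd k (pd l (H i)) x))"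
      by (simp add: sum_distrib_left sum.swap[of _ "UNIV::'d set" A])
    finally show ?thesis .
  qed
  show ?thesis unfolding L0_def p2 unfolding p1 s1 s2
    by (simp add: sum.distrib distrib_left sum_distrib_left mult.left_commute)
qed

lemma L0_elemF:
  assumes fM: "Ck M f" and aM: "\<forall>I. Ck M (\<lambda>y. a y $ I)" and bM: "\<forall>k j. Ck M (\<lambda>y. b y $ k $ j)"
    and t: "t \<in> LTS" and LM: "Suc (length t) \<le> M"
  shows "L0 a b (elemF f a b t js) x = (\<Sum>p=1..length t. elemF f a b (t @ [(p, Tau)]) js x) +
     1/2 * (\<Sum>j\<in>UNIV. \<Sum>q=1..length t. \<Sum>p=1..length t.
        elemF f a b (t @ [(q, Sigma (s_nodes t div 2 + 1)), (p, Sigma (s_nodes t div 2 + 1))]) (js(s_nodes t div 2 + 1 := j)) x)"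
proof -
  have "(\<Sum>k\<in>UNIV. \<Sum>l\<in>UNIV. \<Sum>j\<in>UNIV. b x $ k $ j * b x $ l $ j * pd k (pd l (elemF f a b t js)) x) =
     (\<Sum>k\<in>UNIV. \<Sum>j\<in>UNIV. \<Sum>l\<in>UNIV. b x $ k $ j * b x $ l $ j * pd k (pd l (elemF f a b t js)) x)"
    by (rule sum.cong[OF refl]) (rule sum.swap)
  also have "\<dots> = (\<Sum>j\<in>UNIV. \<Sum>k\<in>UNIV. \<Sum>l\<in>UNIV. b x $ k $ j * b x $ l $ j * pd k (pd l (elemF f a b t js)) x)"
    by (rule sum.swap)
  also have "\<dots> = (\<Sum>j\<in>UNIV. \<Sum>q=1..length t. \<Sum>p=1..length t.
        elemF f a b (t @ [(q, Sigma (s_nodes t div 2 + 1)), (p, Sigma (s_nodes t div 2 + 1))]) (js(s_nodes t div 2 + 1 := j)) x)"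
    by (rule sum.cong[OF refl]) (rule diffusion_term_elemF[OF fM aM bM t LM refl])
  finally have B: "(\<Sum>k\<in>UNIV. \<Sum>l\<in>UNIV. \<Sum>j\<in>UNIV. b x $ k $ j * b x $ l $ j * pd k (pd l (elemF f a b t js)) x) =
     (\<Sum>j\<in>UNIV. \<Sum>q=1..length t. \<Sum>p=1..length t.
        elemF f a b (t @ [(q, Sigma (s_nodes t div 2 + 1)), (p, Sigma (s_nodes t div 2 + 1))]) (js(s_nodes t div 2 + 1 := j)) x)" .
  have A: "(\<Sum>k\<in>UNIV. a x $ k * pd k (elemF f a b t js) x) = (\<Sum>p=1..length t. elemF f a b (t @ [(p, Tau)]) js x)"
    by (rule drift_term_elemF[OF fM aM bM t]) (use LM in simp)
  show ?thesis unfolding L0_def A B ..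
qed

section \<open>The generator applied to tree sums\<close>

definition index_maps :: "tree \<Rightarrow> (nat \<Rightarrow> 'm) set" where
  "index_maps t = {1..s_nodes t div 2} \<rightarrow>\<^sub>E UNIV"

lemma finite_index_maps: "finite (index_maps t :: (nat \<Rightarrow> 'm::finite) set)"
  unfolding index_maps_def by (rule finite_PiE) auto

lemma sum_index_maps_Suc:
  "(\<Sum>js\<in>{1..Suc K} \<rightarrow>\<^sub>E (UNIV::'m::finite set). F js) =
     (\<Sum>j\<in>UNIV. \<Sum>js\<in>{1..K} \<rightarrow>\<^sub>E UNIV. F (js(Suc K := j)))"
proof -
  have "{1..Suc K} = insert (Suc K) {1..K}" by auto
  then show ?thesis by (simp add: sum_PiE_insert)
qed

definition tree_sum :: "(real^'d::finite \<Rightarrow> real) \<Rightarrow> (real^'d \<Rightarrow> real^'d) \<Rightarrow> (real^'d \<Rightarrow> real^'m::finite^'d)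
    \<Rightarrow> nat \<Rightarrow> real^'d \<Rightarrow> real" where
  "tree_sum f a b n x = (\<Sum>t\<in>trees_of_order n. \<Sum>js\<in>index_maps t. elemF f a b t js x / 2 ^ (s_nodes t div 2))"

lemma tree_sum_0: "tree_sum f a b 0 x = f x"
proof -
  have s0: "s_nodes [(0, Gamma)] = 0" by (simp add: s_nodes_def)
  have maps: "index_maps [(0, Gamma)] = {\<lambda>_. undefined}" by (simp add: index_maps_def s0)
  have "elemF f a b [(0, Gamma)] js x = f x" for js
    unfolding elemF_def by (simp add: children_beyond dapp_Nil)
  then show ?thesis by (simp add: tree_sum_def trees_of_order_0 s0 maps)
qed

lemma tree_sum_Suc:
  "tree_sum f a b (Suc n) x = (\<Sum>t\<in>trees_of_order n. \<Sum>js\<in>index_maps t.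
     ((\<Sum>p=1..length t. elemF f a b (t @ [(p, Tau)]) js x)
      + 1/2 * (\<Sum>j\<in>UNIV. \<Sum>q=1..length t. \<Sum>p=1..length t.
          elemF f a b (t @ [(q, Sigma (s_nodes t div 2 + 1)), (p, Sigma (s_nodes t div 2 + 1))])
            (js(s_nodes t div 2 + 1 := j)) x)) / 2 ^ (s_nodes t div 2))"
proof -
  define F where "F t' = (\<Sum>js\<in>index_maps t'. elemF f a b t' js x / 2 ^ (s_nodes t' div 2))" for t'
  have tau: "F (t @ [(p, Tau)]) =
      (\<Sum>js\<in>index_maps t. elemF f a b (t @ [(p, Tau)]) js x / 2 ^ (s_nodes t div 2))" for t p
    by (simp add: F_def index_maps_def s_nodes_snoc_tau)
  have sigma: "F (t @ [(q, Sigma (s_nodes t div 2 + 1)), (p, Sigma (s_nodes t div 2 + 1))]) =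
      (\<Sum>js\<in>index_maps t. \<Sum>j\<in>UNIV. elemF f a b (t @ [(q, Sigma (s_nodes t div 2 + 1)),
         (p, Sigma (s_nodes t div 2 + 1))]) (js(s_nodes t div 2 + 1 := j)) x / (2 * 2 ^ (s_nodes t div 2)))"
    for t q p
  proof -
    have K: "s_nodes (t @ [(q, Sigma k), (p, Sigma k)]) div 2 = Suc (s_nodes t div 2)" for k
      by (simp add: s_nodes_snoc_sigma)
    show ?thesis
      unfolding F_def index_maps_def K sum_index_maps_Suc by (simp add: sum.swap[of _ UNIV])
  qed
  have regroup: "(\<Sum>p\<in>R. \<Sum>js\<in>P. X p js) + (\<Sum>q\<in>R. \<Sum>p\<in>R. \<Sum>js\<in>P. \<Sum>j\<in>J. Y q p js j) =
      (\<Sum>js\<in>P. (\<Sum>p\<in>R. X p js) + (\<Sum>j\<in>J. \<Sum>q\<in>R. \<Sum>p\<in>R. Y q p js j))"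
    for R P J and X :: "nat \<Rightarrow> (nat \<Rightarrow> 'm) \<Rightarrow> real" and Y :: "nat \<Rightarrow> nat \<Rightarrow> (nat \<Rightarrow> 'm) \<Rightarrow> 'm \<Rightarrow> real"
  proof -
    have "(\<Sum>q\<in>R. \<Sum>p\<in>R. \<Sum>js\<in>P. \<Sum>j\<in>J. Y q p js j) = (\<Sum>q\<in>R. \<Sum>js\<in>P. \<Sum>p\<in>R. \<Sum>j\<in>J. Y q p js j)"
      by (rule sum.cong[OF refl], rule sum.swap)
    also have "\<dots> = (\<Sum>js\<in>P. \<Sum>q\<in>R. \<Sum>p\<in>R. \<Sum>j\<in>J. Y q p js j)"
      by (rule sum.swap)
    also have "\<dots> = (\<Sum>js\<in>P. \<Sum>q\<in>R. \<Sum>j\<in>J. \<Sum>p\<in>R. Y q p js j)"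
      by (rule sum.cong[OF refl], rule sum.cong[OF refl], rule sum.swap)
    also have "\<dots> = (\<Sum>js\<in>P. \<Sum>j\<in>J. \<Sum>q\<in>R. \<Sum>p\<in>R. Y q p js j)"
      by (rule sum.cong[OF refl], rule sum.swap)
    finally show ?thesis by (simp only: sum.distrib sum.swap[of _ R P])
  qed
  have "tree_sum f a b (Suc n) x = (\<Sum>t'\<in>tau_extensions n. F t') + (\<Sum>t'\<in>sigma_extensions n. F t')"
    unfolding tree_sum_def trees_of_order_Suc F_def
    by (rule sum.union_disjoint) (simp_all add: finite_tau_extensions finite_sigma_extensions
        tau_sigma_extensions_disjoint)
  also have "\<dots> = (\<Sum>t\<in>trees_of_order n. \<Sum>js\<in>index_maps t.
      (\<Sum>p=1..length t. elemF f a b (t @ [(p, Tau)]) js x / 2 ^ (s_nodes t div 2))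
      + (\<Sum>j\<in>UNIV. \<Sum>q=1..length t. \<Sum>p=1..length t. elemF f a b (t @ [(q, Sigma (s_nodes t div 2 + 1)),
         (p, Sigma (s_nodes t div 2 + 1))]) (js(s_nodes t div 2 + 1 := j)) x / (2 * 2 ^ (s_nodes t div 2))))"
    unfolding sum_tau_extensions sum_sigma_extensions tau sigma
    by (subst sum.distrib[symmetric], intro sum.cong refl) (rule regroup)
  finally show ?thesis
    by (simp add: sum_divide_distrib sum_distrib_left add_divide_distrib)
qed

lemma L0_tree_sum:
  fixes f :: "real^'d::finite \<Rightarrow> real" and a :: "real^'d \<Rightarrow> real^'d" and b :: "real^'d \<Rightarrow> real^'m::finite^'d"
  assumes fM: "Ck M f" and aM: "\<forall>I. Ck M (\<lambda>y. a y $ I)" and bM: "\<forall>k j. Ck M (\<lambda>y. b y $ k $ j)"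
    and nM: "2 * n + 2 \<le> M"
  shows "L0 a b (tree_sum f a b n) x = tree_sum f a b (Suc n) x"
proof -
  define A where "A = (SIGMA t:trees_of_order n. (index_maps t :: (nat \<Rightarrow> 'm) set))"
  have tM: "t \<in> LTS \<and> Suc (length t) \<le> M" if "t \<in> trees_of_order n" for t
    using that LTS_length_le_rho[of t] nM by (auto simp: trees_of_order_def)
  have C2: "Ck (Suc (Suc 0)) (elemF f a b t js)" if "t \<in> trees_of_order n" for t js
  proof -
    have "Ck (M - (length t - 1)) (elemF f a b t js)" using Ck_elemF[OF fM aM bM] tM[OF that] by simp
    then show ?thesis
      by (rule Ck_mono[rotated]) (use LTS_length_le_rho[of t] nM that in \<open>auto simp: trees_of_order_def\<close>)
  qed
  have partials: "has_partials (elemF f a b t js)" "has_partials (pd l (elemF f a b t js))"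
    if "t \<in> trees_of_order n" for t js l
    using Ck_Suc_has_partials[OF C2[OF that]] Ck_Suc_has_partials[OF Ck_Suc_pd[OF C2[OF that]]] by auto
  have "tree_sum f a b n = (\<lambda>y. \<Sum>i\<in>A. (1 / 2 ^ (s_nodes (fst i) div 2)) * elemF f a b (fst i) (snd i) y)"
    unfolding tree_sum_def A_def
    by (subst sum.Sigma) (auto simp: finite_trees_of_order finite_index_maps split_def)
  then have "L0 a b (tree_sum f a b n) x =
      (\<Sum>i\<in>A. (1 / 2 ^ (s_nodes (fst i) div 2)) * L0 a b (elemF f a b (fst i) (snd i)) x)"
    by (simp only:) (rule L0_linear_combination, auto simp: A_def partials)
  also have "\<dots> = (\<Sum>t\<in>trees_of_order n. \<Sum>js\<in>index_maps t. L0 a b (elemF f a b t js) x / 2 ^ (s_nodes t div 2))"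
    unfolding A_def by (subst sum.Sigma) (auto simp: finite_trees_of_order finite_index_maps split_def)
  also have "\<dots> = tree_sum f a b (Suc n) x"
    unfolding tree_sum_Suc using tM by (simp add: L0_elemF[OF fM aM bM])
  finally show ?thesis .
qed

theorem mainTheorem3:
  fixes f :: "real^'d::finite \<Rightarrow> real"
    and a :: "real^'d \<Rightarrow> real^'d"
    and b :: "real^'d \<Rightarrow> real^'m::finite^'d"
    and n :: nat and x0 :: "real^'d"
  assumes "Ck (2 * n) f"
    and "\<forall>I. Ck (2 * n) (\<lambda>y. a y $ I)"
    and "\<forall>k j. Ck (2 * n) (\<lambda>y. b y $ k $ j)"
  shows "(L0 a b ^^ n) f x0 =
    (\<Sum>t \<in> {t \<in> LTS. rho t = n}. \<Sum>js \<in> {1..s_nodes t div 2} \<rightarrow>\<^sub>E UNIV.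
        elemF f a b t js x0 / 2 ^ (s_nodes t div 2))"
proof -
  have "(L0 a b ^^ k) f = tree_sum f a b k" if "k \<le> n" for k
    using that
  proof (induction k)
    case 0
    show ?case by (simp add: fun_eq_iff tree_sum_0)
  next
    case (Suc k)
    then have "(L0 a b ^^ Suc k) f = L0 a b (tree_sum f a b k)" by simp
    also have "\<dots> = tree_sum f a b (Suc k)"
      using Suc.prems by (intro ext L0_tree_sum[OF assms]) auto
    finally show ?case .
  qed
  then show ?thesis by (simp add: tree_sum_def trees_of_order_def index_maps_def)
qed

end
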